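(* Let $\varepsilon\in\mathbb C$ and $(\beta_k)_{k\in\mathbb Z}$ be generic, and let $(x_k^n)_{k,n\in\mathbb Z}$ be a generic solution of the discrete elliptic Toda system on the triangular lattice $$F(x_k^n,x_k^{n+1};\varepsilon)\,F(x_k^n,x_{k-1}^{n+1};\beta_{k-1}-\varepsilon)\,F(x_k^n,x_k^{n-1};\varepsilon)\,F(x_k^n,x_{k+1}^{n-1};\beta_k-\varepsilon)=F(x_k^n,x_{k+1}^n;\beta_k)\,F(x_k^n,x_{k-1}^n;\beta_{k-1})$$ for all $k,n$. Choose $p_k^n$ and $G_k^n$ with $$e^{2p_k^n}=F(x_k^n,x_k^{n-1};\varepsilon)F(x_k^n,x_{k+1}^{n-1};\beta_k-\varepsilon),\qquad e^{2\varepsilon G_k^n}=\frac{F(x_k^n,x_{k-1}^n;\beta_{k-1})}{F(x_k^n,x_{k-1}^{n+1};\beta_{k-1}-\varepsilon)},$$ and put $L_k^n=e^{p_k^n}M(x_k^n,\beta_k;\lambda)+e^{-p_k^n}M(x_k^n,-\beta_k;-\lambda)$, $V_k^n=e^{\varepsilon G_k^n}M(x_k^n,\varepsilon;\lambda)+e^{-\varepsilon G_k^n}M(x_k^n,-\varepsilon;-\lambda)$. Then for all $k,n$ and generic $\lambda$, the matrices $L_k^{n+1}V_k^n$ and $V_{k+1}^nL_k^n$ are proportional (i.e. they define the same Möbius transformation).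
   Context: $\wp,\sigma$: Weierstrass functions (invariants $g_2,g_3$, nondegenerate). $F(x_0,x_1;\alpha)=\frac{\sigma(x_0+x_1+\alpha)\sigma(x_0-x_1+\alpha)}{\sigma(x_0+x_1-\alpha)\sigma(x_0-x_1-\alpha)}$. $$M(x,\beta;\lambda)=\frac{\sigma^2(x+\lambda-\beta)\sigma^2(x-\lambda)}{\sigma(2x)\sigma(2\lambda)}\begin{pmatrix}-\wp(x+\lambda-\beta) & \wp(x+\lambda-\beta)\wp(x-\lambda)\\ -1 & \wp(x-\lambda)\end{pmatrix}.$$ *)

theory Defs
  imports "HOL-Analysis.Analysis"
begin

text \<open>Weierstrass functions for the period lattice generated by w1, w2
  (with Im (w2 / w1) \<noteq> 0). Every nondegenerate pair of invariants (g2, g3)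
  arises from such a lattice, so this parametrisation covers the paper's setting.\<close>

definition lat_pt :: "complex \<Rightarrow> complex \<Rightarrow> int \<Rightarrow> int \<Rightarrow> complex" where
  "lat_pt w1 w2 m n = of_int m * w1 + of_int n * w2"

definition lat_box :: "nat \<Rightarrow> (int \<times> int) set" where
  "lat_box N = ({- int N..int N} \<times> {- int N..int N}) - {(0, 0)}"

definition wsigma :: "complex \<Rightarrow> complex \<Rightarrow> complex \<Rightarrow> complex" where
  "wsigma w1 w2 z = lim (\<lambda>N. z * (\<Prod>(m, n)\<in>lat_box N.
      (let w = lat_pt w1 w2 m n in (1 - z / w) * exp (z / w + z\<^sup>2 / (2 * w\<^sup>2)))))"

definition wp :: "complex \<Rightarrow> complex \<Rightarrow> complex \<Rightarrow> complex" where
  "wp w1 w2 z = 1 / z\<^sup>2 + lim (\<lambda>N. (\<Sum>(m, n)\<in>lat_box N.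
      (let w = lat_pt w1 w2 m n in 1 / (z - w)\<^sup>2 - 1 / w\<^sup>2)))"

definition wF :: "complex \<Rightarrow> complex \<Rightarrow> complex \<Rightarrow> complex \<Rightarrow> complex \<Rightarrow> complex" where
  "wF w1 w2 x0 x1 a =
     (wsigma w1 w2 (x0 + x1 + a) * wsigma w1 w2 (x0 - x1 + a)) /
     (wsigma w1 w2 (x0 + x1 - a) * wsigma w1 w2 (x0 - x1 - a))"

text \<open>Genericity of the arguments of F: all sigma factors are nonzero.\<close>
definition wF_ok :: "complex \<Rightarrow> complex \<Rightarrow> complex \<Rightarrow> complex \<Rightarrow> complex \<Rightarrow> bool" where
  "wF_ok w1 w2 x0 x1 a \<longleftrightarrow>
     wsigma w1 w2 (x0 + x1 + a) \<noteq> 0 \<and> wsigma w1 w2 (x0 - x1 + a) \<noteq> 0 \<and>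
     wsigma w1 w2 (x0 + x1 - a) \<noteq> 0 \<and> wsigma w1 w2 (x0 - x1 - a) \<noteq> 0"

definition mat2 :: "complex \<Rightarrow> complex \<Rightarrow> complex \<Rightarrow> complex \<Rightarrow> complex^2^2" where
  "mat2 a b c d = vector [vector [a, b], vector [c, d]]"

definition msc :: "complex \<Rightarrow> complex^2^2 \<Rightarrow> complex^2^2" (infixl \<open>*\<^sub>m\<close> 70) where
  "c *\<^sub>m A = (\<chi> i j. c * A $ i $ j)"

definition wM :: "complex \<Rightarrow> complex \<Rightarrow> complex \<Rightarrow> complex \<Rightarrow> complex \<Rightarrow> complex^2^2" where
  "wM w1 w2 x b l =
     ((wsigma w1 w2 (x + l - b))\<^sup>2 * (wsigma w1 w2 (x - l))\<^sup>2 /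
      (wsigma w1 w2 (2 * x) * wsigma w1 w2 (2 * l))) *\<^sub>m
     mat2 (- wp w1 w2 (x + l - b)) (wp w1 w2 (x + l - b) * wp w1 w2 (x - l))
          (-1) (wp w1 w2 (x - l))"

definition wL :: "complex \<Rightarrow> complex \<Rightarrow> complex \<Rightarrow> complex \<Rightarrow> complex \<Rightarrow> complex \<Rightarrow> complex^2^2" where
  "wL w1 w2 p x b l = exp p *\<^sub>m wM w1 w2 x b l + exp (- p) *\<^sub>m wM w1 w2 x (- b) (- l)"

definition wV :: "complex \<Rightarrow> complex \<Rightarrow> complex \<Rightarrow> complex \<Rightarrow> complex \<Rightarrow> complex \<Rightarrow> complex^2^2" where
  "wV w1 w2 eps G x l = exp (eps * G) *\<^sub>m wM w1 w2 x eps l + exp (- (eps * G)) *\<^sub>m wM w1 w2 x (- eps) (- l)"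

end

theory Submission
  imports Defs "HOL-Complex_Analysis.Complex_Analysis"
begin

(* Up to the factor 1/(sigma(2x) sigma(2 lambda)), the matrix M(x,b;lambda) is the column
   c(x+lambda-b) = sigma^2 (wp, 1) times the row r(x-lambda) = sigma^2 (-1, wp), and the addition
   formula wp(u) - wp(v) = -sigma(u+v) sigma(u-v) / (sigma(u)^2 sigma(v)^2) says that r(q) c(p) is
   the bracket [p,q] = sigma(p+q) sigma(p-q).  Hence L(p,x,b) maps c(x+lambda) to e^p c(x+lambda-b)
   and c(x-lambda) to e^(-p) c(x-lambda+b), and V is an L with b = eps.  Both products L V and V L
   are therefore determined by their values on the columns c(x +- lambda), and these can be
   compared against the rows r(z +- (lambda - eps)), which V(z) maps to multiples of
   r(z +- lambda).  Each of the four scalar identities obtained is the three-term relation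
   [a,b][c,d] + [a,c][d,b] + [a,d][b,c] = 0 for sigma, once the Toda equation and the definitions
   of p and G (which fix the squares of the exponentials) are used to match the coefficients; the
   proportionality factor is an explicit product of exponentials and sigma values.

   sigma and wp are the lattice product and sum of the definitions; the addition formula follows
   from Liouville's theorem: u |-> wp(u) - wp(v) + sigma(u+v) sigma(u-v) / (sigma(u)^2 sigma(v)^2)
   is elliptic, its singularities at the lattice points are removable, and it vanishes at u = v. *)

lemma int_multiple_shift_invariant:
  fixes f :: "'a::ring_1 \<Rightarrow> 'b"
  assumes f: "\<And>z. P z \<Longrightarrow> f (z + w) = f z" and P: "\<And>z. P (z + w) \<longleftrightarrow> P z" and z: "P z"
  shows "P (z + of_int n * w) \<and> f (z + of_int n * w) = f z"
proof (induction n rule: int_induct[where k = 0])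
  case base
  thus ?case using z by simp
next
  case (step1 i)
  have e: "z + of_int (i + 1) * w = (z + of_int i * w) + w" by (simp add: algebra_simps)
  show ?case unfolding e using step1(2) f P by simp
next
  case (step2 i)
  have e: "z + of_int i * w = (z + of_int (i - 1) * w) + w" by (simp add: algebra_simps)
  have "P (z + of_int (i - 1) * w)" using step2(2) P unfolding e by simp
  thus ?case using step2(2) f[of "z + of_int (i - 1) * w"] unfolding e by simp
qed

lemma deriv_0_of_even:
  fixes f :: "complex \<Rightarrow> complex"
  assumes "f field_differentiable (at 0)" "\<And>u. f (- u) = f u"
  shows "deriv f 0 = 0"
proof -
  have d: "(f has_field_derivative deriv f 0) (at 0)"
    using assms(1) by (simp add: DERIV_deriv_iff_field_differentiable)
  have "((\<lambda>u. f (- u)) has_field_derivative deriv f 0 * (- 1)) (at 0)"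
    by (rule DERIV_chain2[where g = uminus]) (use d in \<open>auto intro!: derivative_eq_intros\<close>)
  hence "(f has_field_derivative - deriv f 0) (at 0)" using assms(2) by simp
  hence "deriv f 0 = - deriv f 0" using d DERIV_unique by blast
  thus ?thesis by simp
qed

lemma exp_double: "exp (2 * u) = (exp u)\<^sup>2" for u :: complex
  by (simp add: power2_eq_square flip: exp_add)

lemma int_comb_norm_lower_bound:
  fixes \<tau> :: complex
  assumes "Im \<tau> \<noteq> 0"
  shows "\<exists>d>0. \<forall>m n. d * (\<bar>real_of_int m\<bar> + \<bar>real_of_int n\<bar>) \<le> norm (of_int m + of_int n * \<tau>)"
proof -
  define t where "t = \<bar>Im \<tau>\<bar>"
  define K where "K = norm \<tau>"
  have t: "t > 0" using assms by (simp add: t_def)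
  have "(\<bar>real_of_int m\<bar> + \<bar>real_of_int n\<bar>) / (1 + (K + 1) / t) \<le> norm (of_int m + of_int n * \<tau>)" for m n
  proof -
    define A where "A = norm (of_int m + of_int n * \<tau>)"
    have "\<bar>real_of_int n\<bar> * t = \<bar>Im (of_int m + of_int n * \<tau>)\<bar>" by (simp add: t_def abs_mult)
    also have "\<dots> \<le> A" unfolding A_def by (rule abs_Im_le_cmod)
    finally have n_le: "\<bar>real_of_int n\<bar> \<le> A / t" using t by (simp add: field_simps)
    have "\<bar>real_of_int m\<bar> = norm (of_int m + of_int n * \<tau> - of_int n * \<tau>)" by simp
    also have "\<dots> \<le> A + K * \<bar>real_of_int n\<bar>"
      using norm_triangle_ineq4[of "of_int m + of_int n * \<tau>" "of_int n * \<tau>"] by (simp add: A_def K_def norm_mult mult.commute)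
    finally have "\<bar>real_of_int m\<bar> + \<bar>real_of_int n\<bar> \<le> A + (K + 1) * (A / t)"
      using n_le mult_left_mono[OF n_le, of K] by (simp add: K_def algebra_simps)
    also have "\<dots> = A * (1 + (K + 1) / t)" by (simp add: algebra_simps)
    finally show ?thesis using t by (simp add: A_def K_def field_simps add_pos_nonneg)
  qed
  moreover have "1 / (1 + (K + 1) / t) > 0" using t by (simp add: K_def add_pos_nonneg)
  ultimately show ?thesis by (intro exI[of _ "1 / (1 + (K + 1) / t)"]) simp
qed

section \<open>The elementary factor of genus two\<close>

definition elem_factor :: "complex \<Rightarrow> complex" where
  "elem_factor t = (1 - t) * exp (t + t\<^sup>2 / 2)"

definition log_elem_factor :: "complex \<Rightarrow> complex" where
  "log_elem_factor t = Ln (1 - t) + t + t\<^sup>2 / 2"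

lemma elem_factor_0 [simp]: "elem_factor 0 = 1"
  by (simp add: elem_factor_def)

lemma elem_factor_nonzero: "t \<noteq> 1 \<Longrightarrow> elem_factor t \<noteq> 0"
  by (simp add: elem_factor_def)

lemma log_elem_factor_0 [simp]: "log_elem_factor 0 = 0"
  by (simp add: log_elem_factor_def)

lemma elem_factor_eq_exp:
  assumes "norm t < 1"
  shows "elem_factor t = exp (log_elem_factor t)"
proof -
  have "1 - t \<noteq> 0" using assms by auto
  thus ?thesis by (simp add: elem_factor_def log_elem_factor_def exp_add flip: add.assoc)
qed

lemma has_field_derivative_elem_factor:
  "(elem_factor has_field_derivative (- (t\<^sup>2) * exp (t + t\<^sup>2 / 2))) (at t)"
  unfolding elem_factor_def [abs_def]
  by (auto intro!: derivative_eq_intros simp: algebra_simps power2_eq_square)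

lemma has_field_derivative_log_elem_factor:
  assumes "norm t < 1"
  shows "(log_elem_factor has_field_derivative (- (t\<^sup>2) / (1 - t))) (at t)"
proof -
  have "Re t \<le> norm t" by (rule complex_Re_le_cmod)
  hence "1 - t \<notin> \<real>\<^sub>\<le>\<^sub>0" using assms by (auto simp: complex_nonpos_Reals_iff)
  moreover have "1 - t \<noteq> 0" using assms by auto
  ultimately show ?thesis unfolding log_elem_factor_def [abs_def]
    by (auto intro!: derivative_eq_intros simp: field_simps power2_eq_square)
qed

lemma log_elem_factor_bound:
  assumes "norm t \<le> 1/2"
  shows "norm (log_elem_factor t) \<le> 2 * norm t ^ 3"
proof -
  have "norm (log_elem_factor t - log_elem_factor 0) \<le> (2 * norm t ^ 2) * norm (t - 0)"
  proof (rule field_differentiable_bound[of "cball 0 (norm t)" log_elem_factor "\<lambda>s. - (s\<^sup>2) / (1 - s)"])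
    show "convex (cball (0::complex) (norm t))" by (rule convex_cball)
    fix s assume "s \<in> cball (0::complex) (norm t)"
    hence sn: "norm s \<le> norm t" by simp
    hence s1: "norm s < 1" using assms by simp
    show "(log_elem_factor has_field_derivative - (s\<^sup>2) / (1 - s)) (at s within cball 0 (norm t))"
      by (rule has_field_derivative_at_within[OF has_field_derivative_log_elem_factor[OF s1]])
    have "norm (1 - s) \<ge> 1 - norm s" using norm_triangle_ineq2[of 1 s] by simp
    hence d: "norm (1 - s) \<ge> 1/2" using sn assms by simp
    have "norm (- (s\<^sup>2) / (1 - s)) = norm s ^ 2 / norm (1 - s)" by (simp add: norm_divide norm_power)
    also have "\<dots> \<le> norm t ^ 2 / (1/2)"
      by (rule frac_le) (use d sn in \<open>auto intro: power_mono\<close>)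
    finally show "norm (- (s\<^sup>2) / (1 - s)) \<le> 2 * norm t ^ 2" by simp
  qed auto
  thus ?thesis by (simp add: power3_eq_cube power2_eq_square mult.assoc)
qed

section \<open>Two by two matrices\<close>

definition pairing :: "complex^2 \<Rightarrow> complex^2 \<Rightarrow> complex" where
  "pairing r c = r $ 1 * c $ 1 + r $ 2 * c $ 2"

definition det2 :: "complex^2 \<Rightarrow> complex^2 \<Rightarrow> complex" where
  "det2 u v = u $ 1 * v $ 2 - u $ 2 * v $ 1"

lemma pairing_commute: "pairing r c = pairing c r"
  by (simp add: pairing_def mult.commute)

lemma pairing_scale_right [simp]: "pairing r (t *s c) = t * pairing r c"
  by (simp add: pairing_def algebra_simps)

lemma pairing_diff_right [simp]: "pairing r (c - d) = pairing r c - pairing r d"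
  by (simp add: pairing_def algebra_simps)

lemma matrix_vector_mult_nth: "(A *v c) $ i = pairing (A $ i) c"
  by (simp add: matrix_vector_mult_def pairing_def sum_2)

lemma mat2_mult_vector:
  "mat2 a b c d *v vector [u, v] = vector [a * u + b * v, c * u + d * v]"
  by (simp add: vec_eq_iff forall_2 matrix_vector_mult_def sum_2 mat2_def)

lemma msc_mult_vector: "(t *\<^sub>m A) *v v = t *s (A *v v)"
  by (simp add: vec_eq_iff matrix_vector_mult_def msc_def sum_distrib_left mult.assoc)

lemma vector2_eq_by_pairing:
  assumes "det2 r1 r2 \<noteq> 0" "pairing r1 u = pairing r1 v" "pairing r2 u = pairing r2 v"
  shows "u = v"
proof -
  have p: "pairing r1 (u - v) = 0" "pairing r2 (u - v) = 0"
    using assms(2,3) by (simp_all add: pairing_def algebra_simps)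
  have "det2 r1 r2 * (u - v) $ 1 = r2 $ 2 * pairing r1 (u - v) - r1 $ 2 * pairing r2 (u - v)"
       "det2 r1 r2 * (u - v) $ 2 = r1 $ 1 * pairing r2 (u - v) - r2 $ 1 * pairing r1 (u - v)"
    by (simp_all add: det2_def pairing_def algebra_simps)
  hence "(u - v) $ 1 = 0" "(u - v) $ 2 = 0"
    unfolding p using assms(1) by simp_all
  thus ?thesis by (simp add: vec_eq_iff forall_2)
qed

lemma matrix2_eq_by_tests:
  fixes A B :: "complex^2^2"
  assumes "det2 r1 r2 \<noteq> 0" "det2 c1 c2 \<noteq> 0"
    and "\<And>r c. r \<in> {r1, r2} \<Longrightarrow> c \<in> {c1, c2} \<Longrightarrow> pairing r (A *v c) = pairing r (B *v c)"
  shows "A = B"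
proof -
  have "A *v c = B *v c" if "c \<in> {c1, c2}" for c
    using assms(3)[OF _ that] by (intro vector2_eq_by_pairing[OF assms(1)]) auto
  hence "pairing c (A $ i) = pairing c (B $ i)" if "c \<in> {c1, c2}" for c i
    using that by (metis matrix_vector_mult_nth pairing_commute)
  hence "A $ i = B $ i" for i
    by (intro vector2_eq_by_pairing[OF assms(2)]) auto
  thus ?thesis by (simp add: vec_eq_iff)
qed

section \<open>Lattice sums\<close>

locale period_lattice =
  fixes w1 w2 :: complex
  assumes periods: "Im (w2 / w1) \<noteq> 0"
begin

abbreviation \<omega> :: "int \<times> int \<Rightarrow> complex" where
  "\<omega> i \<equiv> lat_pt w1 w2 (fst i) (snd i)"

abbreviation \<sigma> :: "complex \<Rightarrow> complex" where "\<sigma> \<equiv> wsigma w1 w2"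

abbreviation \<P> :: "complex \<Rightarrow> complex" where "\<P> \<equiv> wp w1 w2"

definition nonzero_idx :: "(int \<times> int) set" where "nonzero_idx = UNIV - {(0,0)}"

definition \<Lambda> :: "complex set" where "\<Lambda> = range \<omega>"

lemma w1_nz: "w1 \<noteq> 0"
  using periods by auto

lemma lattice_norm_lower_bound:
  "\<exists>\<delta>>0. \<forall>m n. \<delta> * (\<bar>real_of_int m\<bar> + \<bar>real_of_int n\<bar>) \<le> norm (lat_pt w1 w2 m n)"
proof -
  obtain d where d: "d > 0" "\<And>m n. d * (\<bar>real_of_int m\<bar> + \<bar>real_of_int n\<bar>) \<le> norm (of_int m + of_int n * (w2 / w1))"
    using int_comb_norm_lower_bound periods by blast
  have "lat_pt w1 w2 m n = w1 * (of_int m + of_int n * (w2 / w1))" for m n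
    using w1_nz by (simp add: lat_pt_def field_simps)
  hence "norm (lat_pt w1 w2 m n) = norm w1 * norm (of_int m + of_int n * (w2 / w1))" for m n
    by (simp only: norm_mult)
  hence "d * norm w1 * (\<bar>real_of_int m\<bar> + \<bar>real_of_int n\<bar>) \<le> norm (lat_pt w1 w2 m n)" for m n
    using mult_left_mono[OF d(2)[of m n], of "norm w1"] by (simp add: algebra_simps)
  thus ?thesis using d(1) w1_nz by (intro exI[of _ "d * norm w1"]) auto
qed

definition lat_sep :: real where
  "lat_sep = (SOME \<delta>. \<delta> > 0 \<and>
     (\<forall>m n. \<delta> * (\<bar>real_of_int m\<bar> + \<bar>real_of_int n\<bar>) \<le> norm (lat_pt w1 w2 m n)))"

lemma lat_sep_pos: "lat_sep > 0" and lat_sep_le: "lat_sep * (\<bar>real_of_int m\<bar> + \<bar>real_of_int n\<bar>) \<le> norm (lat_pt w1 w2 m n)"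
  using someI_ex[OF lattice_norm_lower_bound] unfolding lat_sep_def by blast+

lemma lat_sep_le_norm: "lat_sep * (\<bar>real_of_int (fst i)\<bar> + \<bar>real_of_int (snd i)\<bar>) \<le> norm (\<omega> i)"
  using lat_sep_le by simp

lemma lat_pt_eq_0_iff: "\<omega> i = 0 \<longleftrightarrow> i = (0,0)"
proof
  assume "\<omega> i = 0"
  hence "lat_sep * (\<bar>real_of_int (fst i)\<bar> + \<bar>real_of_int (snd i)\<bar>) \<le> 0" using lat_sep_le_norm[of i] by simp
  hence "\<bar>real_of_int (fst i)\<bar> + \<bar>real_of_int (snd i)\<bar> \<le> 0" using lat_sep_pos
    by (simp add: mult_le_0_iff)
  thus "i = (0,0)" by (cases i) auto
qed (simp add: lat_pt_def)

lemma lat_pt_nonzero: "i \<in> nonzero_idx \<Longrightarrow> \<omega> i \<noteq> 0"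
  by (simp add: nonzero_idx_def lat_pt_eq_0_iff)

lemma finite_idx_norm_le: "finite {i. norm (\<omega> i) \<le> r}"
proof -
  obtain N :: nat where N: "r / lat_sep \<le> real N" using real_arch_simple by blast
  have "{i. norm (\<omega> i) \<le> r} \<subseteq> {-int N..int N} \<times> {-int N..int N}"
  proof safe
    fix a b assume "norm (\<omega> (a,b)) \<le> r"
    hence "lat_sep * (\<bar>real_of_int a\<bar> + \<bar>real_of_int b\<bar>) \<le> r" using lat_sep_le_norm[of "(a,b)"] by simp
    hence "\<bar>real_of_int a\<bar> + \<bar>real_of_int b\<bar> \<le> r / lat_sep" using lat_sep_pos by (simp add: field_simps)
    hence "\<bar>real_of_int a\<bar> \<le> real N" "\<bar>real_of_int b\<bar> \<le> real N" using N by linarith+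
    thus "a \<in> {-int N..int N}" "b \<in> {-int N..int N}" by (simp_all add: abs_le_iff; linarith)+
  qed
  thus ?thesis by (rule finite_subset) auto
qed

(* decay m * decay n is summable over Z^2 and, by the AM-GM inequality, dominates (|m| + |n|)^(-3). *)
definition decay :: "int \<Rightarrow> real" where "decay m = 1 / ((1 + \<bar>real_of_int m\<bar>) * sqrt (1 + \<bar>real_of_int m\<bar>))"

lemma decay_nonneg: "decay m \<ge> 0"
  unfolding decay_def by simp

lemma summable_decay_nat: "summable (\<lambda>n::nat. 1 / ((1 + real n) * sqrt (1 + real n)))"
proof -
  have s0: "summable (\<lambda>n::nat. real n powr (-3/2))"
    using summable_real_powr_iff[of "-3/2"] by simp
  have s1: "summable (\<lambda>n::nat. real (Suc n) powr (-3/2))"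
    using summable_Suc_iff[of "\<lambda>n::nat. real n powr (-3/2)"] s0 by (simp only:)
  have eq: "real (Suc n) powr (-3/2) = 1 / ((1 + real n) * sqrt (1 + real n))" for n
  proof -
    have "real (Suc n) powr (-3/2) = inverse (real (Suc n) powr (3/2))"
      by (subst powr_minus[symmetric]) simp
    also have "real (Suc n) powr (3/2) = real (Suc n) powr 1 * real (Suc n) powr (1/2)"
      by (subst powr_add[symmetric]) simp
    also have "\<dots> = (1 + real n) * sqrt (1 + real n)"
      by (simp add: powr_half_sqrt)
    finally show ?thesis by (simp only: divide_inverse mult_1)
  qed
  have "(\<lambda>n::nat. real (Suc n) powr (-3/2)) = (\<lambda>n::nat. 1 / ((1 + real n) * sqrt (1 + real n)))"
    by (rule ext) (rule eq)
  with s1 show ?thesis by (simp only:)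
qed

lemma decay_summable_on: "decay summable_on (UNIV :: int set)"
proof -
  have s0: "(\<lambda>n::nat. 1 / ((1 + real n) * sqrt (1 + real n))) summable_on UNIV"
    by (rule norm_summable_imp_summable_on) (use summable_decay_nat in simp)
  have e1: "(decay \<circ> int) = (\<lambda>n::nat. 1 / ((1 + real n) * sqrt (1 + real n)))"
    by (rule ext) (simp add: decay_def)
  have e2: "(decay \<circ> (\<lambda>n. - int n)) = (\<lambda>n::nat. 1 / ((1 + real n) * sqrt (1 + real n)))"
    by (rule ext) (simp add: decay_def)
  have i2: "inj_on (\<lambda>n::nat. - int n) UNIV" by (rule inj_onI) simp
  have A: "decay summable_on (int ` UNIV)"
    using summable_on_reindex[of int UNIV decay] e1 s0 by simp
  have B: "decay summable_on ((\<lambda>n. - int n) ` UNIV)"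
    using summable_on_reindex[OF i2, of decay] e2 s0 by simp
  have U: "UNIV = int ` UNIV \<union> (\<lambda>n. - int n) ` UNIV"
  proof (rule set_eqI)
    fix x :: int
    show "x \<in> UNIV \<longleftrightarrow> x \<in> int ` UNIV \<union> (\<lambda>n. - int n) ` UNIV"
    proof (cases "x \<ge> 0")
      case True
      hence "x = int (nat x)" by simp
      thus ?thesis by blast
    next
      case False
      hence "x = - int (nat (- x))" by simp
      thus ?thesis by blast
    qed
  qed
  show ?thesis by (subst U) (rule summable_on_union[OF A B])
qed

lemma decay2_summable_on: "(\<lambda>i. decay (fst i) * decay (snd i)) summable_on (UNIV :: (int \<times> int) set)"
proof (rule nonneg_bdd_above_summable_on)
  show "0 \<le> decay (fst x) * decay (snd x)" for x using decay_nonneg by simp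
  show "bdd_above (sum (\<lambda>i. decay (fst i) * decay (snd i)) ` {F. F \<subseteq> UNIV \<and> finite F})"
  proof (rule bdd_aboveI2)
    fix F :: "(int \<times> int) set" assume "F \<in> {F. F \<subseteq> UNIV \<and> finite F}"
    hence F: "finite F" by simp
    have "(\<Sum>i\<in>F. decay (fst i) * decay (snd i)) \<le> (\<Sum>i\<in>fst ` F \<times> snd ` F. decay (fst i) * decay (snd i))"
      by (rule sum_mono2) (use F decay_nonneg in \<open>auto intro: mult_nonneg_nonneg simp: rev_image_eqI\<close>)
    also have "\<dots> = (\<Sum>m\<in>fst ` F. decay m) * (\<Sum>n\<in>snd ` F. decay n)"
      by (simp add: sum_product sum.cartesian_product case_prod_unfold)
    also have "\<dots> \<le> infsum decay UNIV * infsum decay UNIV"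
      by (intro mult_mono finite_sum_le_infsum decay_summable_on sum_nonneg infsum_nonneg)
         (use F decay_nonneg in auto)
    finally show "(\<Sum>i\<in>F. decay (fst i) * decay (snd i)) \<le> infsum decay UNIV * infsum decay UNIV" .
  qed
qed

lemma decay2_norm_cube_ge:
  fixes m n :: int
  assumes "(m, n) \<noteq> (0, 0)"
  shows "decay m * decay n * (\<bar>real_of_int m\<bar> + \<bar>real_of_int n\<bar>) ^ 3 \<ge> 8 / 27"
proof -
  define P where "P = 1 + \<bar>real_of_int m\<bar>"
  define Q where "Q = 1 + \<bar>real_of_int n\<bar>"
  define s where "s = \<bar>real_of_int m\<bar> + \<bar>real_of_int n\<bar>"
  have s1: "s \<ge> 1" using assms unfolding s_def by (cases "m = 0") auto
  have P1: "P \<ge> 1" and Q1: "Q \<ge> 1" by (auto simp: P_def Q_def)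
  define r where "r = sqrt (P * Q)"
  have r0: "r > 0" using P1 Q1 by (simp add: r_def)
  have rr: "r * r = P * Q" using P1 Q1 by (simp add: r_def)
  have "r \<le> (P + Q) / 2"
  proof -
    have "(sqrt P - sqrt Q)^2 \<ge> 0" by simp
    hence "2 * (sqrt P * sqrt Q) \<le> P + Q" using P1 Q1 by (simp add: power2_eq_square algebra_simps)
    thus ?thesis by (simp add: r_def real_sqrt_mult)
  qed
  also have "(P + Q) / 2 \<le> 3 * s / 2" using s1 by (simp add: P_def Q_def s_def)
  finally have r_le: "r \<le> 3 * s / 2" .
  have am: "decay m = 1 / (P * sqrt P)" by (simp add: decay_def P_def)
  have an: "decay n = 1 / (Q * sqrt Q)" by (simp add: decay_def Q_def)
  have "sqrt P * sqrt Q = r" by (simp add: r_def real_sqrt_mult)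
  hence "decay m * decay n = 1 / ((P * Q) * r)" by (simp add: am an algebra_simps)
  hence "decay m * decay n = 1 / (r * r * r)" by (simp add: rr)
  moreover have "r * r * r \<le> (3 * s / 2) ^ 3"
  proof -
    have "r * r * r = r ^ 3" by (simp add: power3_eq_cube)
    also have "\<dots> \<le> (3 * s / 2) ^ 3" by (rule power_mono[OF r_le]) (use r0 in simp)
    finally show ?thesis .
  qed
  ultimately have "decay m * decay n \<ge> 1 / (3 * s / 2) ^ 3"
    using r0 by (simp add: frac_le)
  hence "decay m * decay n * s ^ 3 \<ge> 1 / (3 * s / 2) ^ 3 * s ^ 3"
    using s1 by (intro mult_right_mono) auto
  also have "1 / (3 * s / 2) ^ 3 * s ^ 3 = 8 / 27" using s1 by (simp add: field_simps power3_eq_cube)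
  finally show ?thesis by (simp add: s_def)
qed

lemma summable_on_inv_norm_cube: "(\<lambda>i. 1 / norm (\<omega> i) ^ 3) summable_on nonzero_idx"
proof (rule summable_on_comparison_test)
  show "(\<lambda>i. 27 / 8 / lat_sep ^ 3 * (decay (fst i) * decay (snd i))) summable_on nonzero_idx"
    by (intro summable_on_cmult_right summable_on_subset[OF decay2_summable_on]) auto
  fix i assume i: "i \<in> nonzero_idx"
  show "0 \<le> 1 / norm (\<omega> i) ^ 3" by simp
  define s where "s = \<bar>real_of_int (fst i)\<bar> + \<bar>real_of_int (snd i)\<bar>"
  have ne: "(fst i, snd i) \<noteq> (0,0)" using i by (auto simp: nonzero_idx_def)
  have s1: "s > 0" using ne unfolding s_def by (cases "fst i = 0") auto
  have cb: "decay (fst i) * decay (snd i) * s ^ 3 \<ge> 8 / 27" using decay2_norm_cube_ge[OF ne] by (simp add: s_def)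
  have "(lat_sep * s) ^ 3 \<le> norm (\<omega> i) ^ 3"
    by (rule power_mono) (use lat_sep_le_norm[of i] lat_sep_pos s1 in \<open>auto simp: s_def\<close>)
  moreover have "0 < (lat_sep * s) ^ 3" using lat_sep_pos s1 by simp
  ultimately have "1 / norm (\<omega> i) ^ 3 \<le> 1 / (lat_sep * s) ^ 3"
    by (intro frac_le) simp_all
  also have "\<dots> = 27 / 8 / lat_sep ^ 3 * (8 / 27 / s ^ 3)"
    using lat_sep_pos s1 by (simp add: field_simps power_mult_distrib)
  also have "\<dots> \<le> 27 / 8 / lat_sep ^ 3 * (decay (fst i) * decay (snd i))"
    using cb lat_sep_pos s1 by (intro mult_left_mono) (auto simp: field_simps)
  finally show "1 / norm (\<omega> i) ^ 3 \<le> 27 / 8 / lat_sep ^ 3 * (decay (fst i) * decay (snd i))" .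
qed

lemma finite_lat_box: "finite (lat_box N)"
  unfolding lat_box_def by auto

lemma lat_box_mono: "N \<le> M \<Longrightarrow> lat_box N \<subseteq> lat_box M"
  unfolding lat_box_def by auto

lemma lat_box_subset_nonzero: "lat_box N \<subseteq> nonzero_idx"
  unfolding lat_box_def nonzero_idx_def by auto

lemma finite_subset_lat_box:
  assumes "finite X" "X \<subseteq> nonzero_idx"
  shows "\<exists>N. X \<subseteq> lat_box N"
proof -
  define N where "N = Max (insert 0 ((\<lambda>i. nat \<bar>fst i\<bar>) ` X \<union> (\<lambda>i. nat \<bar>snd i\<bar>) ` X))"
  have "X \<subseteq> lat_box N"
  proof
    fix i assume i: "i \<in> X"
    have "nat \<bar>fst i\<bar> \<le> N" "nat \<bar>snd i\<bar> \<le> N"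
      unfolding N_def using assms(1) i by (auto intro!: Max_ge)
    moreover have "i \<noteq> (0,0)" using i assms(2) by (auto simp: nonzero_idx_def)
    ultimately show "i \<in> lat_box N" unfolding lat_box_def by (cases i) auto
  qed
  thus ?thesis by blast
qed

lemma filterlim_lat_box:
  assumes "A \<subseteq> nonzero_idx"
  shows "filterlim (\<lambda>N. A \<inter> lat_box N) (finite_subsets_at_top A) sequentially"
  unfolding filterlim_finite_subsets_at_top
proof (intro allI impI)
  fix X assume X: "finite X \<and> X \<subseteq> A"
  then obtain N0 where N0: "X \<subseteq> lat_box N0" using finite_subset_lat_box[of X] assms by blast
  show "\<forall>\<^sub>F N in sequentially. finite (A \<inter> lat_box N) \<and> X \<subseteq> A \<inter> lat_box N \<and> A \<inter> lat_box N \<subseteq> A"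
    using eventually_ge_at_top[of N0]
  proof eventually_elim
    case (elim N)
    thus ?case using X N0 lat_box_mono[OF elim] finite_lat_box by auto
  qed
qed

lemma tendsto_sum_lat_box:
  assumes "(f has_sum S) A" "A \<subseteq> nonzero_idx"
  shows "(\<lambda>N. \<Sum>i\<in>A \<inter> lat_box N. f i) \<longlonglongrightarrow> S"
proof -
  have "(sum f \<longlongrightarrow> S) (finite_subsets_at_top A)" using assms(1) by (simp add: has_sum_def)
  from filterlim_compose[OF this filterlim_lat_box[OF assms(2)]] show ?thesis by (simp add: o_def)
qed

lemma summable_on_cube_bound:
  fixes f :: "int \<times> int \<Rightarrow> complex"
  assumes "A \<subseteq> nonzero_idx" "\<And>i. i \<in> A \<Longrightarrow> norm (f i) \<le> C / norm (\<omega> i) ^ 3"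
  shows "f summable_on A"
proof -
  have "(\<lambda>i. C * (1 / norm (\<omega> i) ^ 3)) summable_on A"
    by (intro summable_on_cmult_right summable_on_subset[OF summable_on_inv_norm_cube assms(1)])
  hence "(\<lambda>i. norm (f i)) summable_on A"
    by (rule summable_on_comparison_test) (use assms(2) in auto)
  thus ?thesis by (rule abs_summable_summable)
qed

lemma has_field_derivative_infsum:
  fixes f f' :: "int \<times> int \<Rightarrow> complex \<Rightarrow> complex"
  assumes A: "A \<subseteq> nonzero_idx" and R: "R > 0"
    and b0: "\<And>i z. i \<in> A \<Longrightarrow> z \<in> cball 0 R \<Longrightarrow> norm (f i z) \<le> C / norm (\<omega> i) ^ 3"
    and b1: "\<And>i z. i \<in> A \<Longrightarrow> z \<in> cball 0 R \<Longrightarrow> norm (f' i z) \<le> C' / norm (\<omega> i) ^ 3"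
    and d: "\<And>i z. i \<in> A \<Longrightarrow> z \<in> cball 0 R \<Longrightarrow> (f i has_field_derivative f' i z) (at z)"
    and z: "z \<in> ball 0 R"
  shows "((\<lambda>z. infsum (\<lambda>i. f i z) A) has_field_derivative infsum (\<lambda>i. f' i z) A) (at z)"
proof -
  have Msum: "(\<lambda>i. C / norm (\<omega> i) ^ 3) summable_on A"
    using summable_on_cmult_right[OF summable_on_subset[OF summable_on_inv_norm_cube A], of C] by simp
  have ul: "uniform_limit (cball 0 R) (\<lambda>X z. \<Sum>i\<in>X. f i z) (\<lambda>z. infsum (\<lambda>i. f i z) A) (finite_subsets_at_top A)"
    by (rule Weierstrass_m_test_general[OF b0 Msum])
  have ev: "\<forall>\<^sub>F X in finite_subsets_at_top A. continuous_on (cball 0 R) (\<lambda>z. \<Sum>i\<in>X. f i z) \<and>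
      (\<forall>w\<in>ball 0 R. ((\<lambda>z. \<Sum>i\<in>X. f i z) has_field_derivative (\<Sum>i\<in>X. f' i w)) (at w))"
  proof (rule eventually_finite_subsets_at_top_weakI)
    fix X assume X: "finite X" "X \<subseteq> A"
    have "continuous_on (cball 0 R) (\<lambda>z. \<Sum>i\<in>X. f i z)"
    proof (intro continuous_on_sum)
      fix i assume "i \<in> X"
      hence "i \<in> A" using X by auto
      thus "continuous_on (cball 0 R) (f i)"
        by (intro continuous_at_imp_continuous_on ballI DERIV_isCont[OF d])
    qed
    moreover have "\<forall>w\<in>ball 0 R. ((\<lambda>z. \<Sum>i\<in>X. f i z) has_field_derivative (\<Sum>i\<in>X. f' i w)) (at w)"
      using X d by (auto intro!: DERIV_sum)
    ultimately show "continuous_on (cball 0 R) (\<lambda>z. \<Sum>i\<in>X. f i z) \<and>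
      (\<forall>w\<in>ball 0 R. ((\<lambda>z. \<Sum>i\<in>X. f i z) has_field_derivative (\<Sum>i\<in>X. f' i w)) (at w))" by blast
  qed
  obtain g' where g': "\<And>w. w \<in> ball 0 R \<Longrightarrow> ((\<lambda>z. infsum (\<lambda>i. f i z) A) has_field_derivative g' w) (at w) \<and>
      ((\<lambda>X. \<Sum>i\<in>X. f' i w) \<longlongrightarrow> g' w) (finite_subsets_at_top A)"
    using has_complex_derivative_uniform_limit[OF ev ul _ R] by auto
  have "(\<lambda>i. f' i z) summable_on A"
    by (rule summable_on_cube_bound[OF A, of _ C']) (use b1 z in auto)
  hence "((\<lambda>X. \<Sum>i\<in>X. f' i z) \<longlongrightarrow> infsum (\<lambda>i. f' i z) A) (finite_subsets_at_top A)"
    using has_sum_infsum[of "\<lambda>i. f' i z" A] by (simp add: has_sum_def)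
  hence "g' z = infsum (\<lambda>i. f' i z) A"
    using g'[OF z] by (intro tendsto_unique[of "finite_subsets_at_top A"]) auto
  thus ?thesis using g'[OF z] by simp
qed

(* For |z| <= R the lattice terms split into the finitely many near ones, |omega| <= 2R, and the far
   ones, which are O(|omega|^-3) uniformly in z. *)
definition near_idx :: "real \<Rightarrow> (int \<times> int) set" where "near_idx R = {i \<in> nonzero_idx. norm (\<omega> i) \<le> 2 * R}"
definition far_idx :: "real \<Rightarrow> (int \<times> int) set" where "far_idx R = {i \<in> nonzero_idx. 2 * R < norm (\<omega> i)}"

definition log_term :: "int \<times> int \<Rightarrow> complex \<Rightarrow> complex" where "log_term i z = log_elem_factor (z / \<omega> i)"
definition zeta_term :: "int \<times> int \<Rightarrow> complex \<Rightarrow> complex" where "zeta_term i z = z\<^sup>2 / ((\<omega> i)\<^sup>2 * (z - \<omega> i))"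
definition dzeta_term :: "int \<times> int \<Rightarrow> complex \<Rightarrow> complex" where "dzeta_term i z = 1 / (\<omega> i)\<^sup>2 - 1 / (z - \<omega> i)\<^sup>2"
definition d2zeta_term :: "int \<times> int \<Rightarrow> complex \<Rightarrow> complex" where "d2zeta_term i z = 2 / (z - \<omega> i) ^ 3"

lemma finite_near_idx: "finite (near_idx R)"
  by (rule finite_subset[OF _ finite_idx_norm_le[of "2 * R"]]) (auto simp: near_idx_def)

lemma near_far_disjoint: "near_idx R \<inter> far_idx R = {}" and near_far_union: "near_idx R \<union> far_idx R = nonzero_idx"
  by (auto simp: near_idx_def far_idx_def)

lemma far_idx_subset: "far_idx R \<subseteq> nonzero_idx" by (auto simp: far_idx_def)

lemma far_idxD: "i \<in> far_idx R \<Longrightarrow> 2 * R < norm (\<omega> i)" by (simp add: far_idx_def)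

lemma far_bounds:
  assumes "norm z \<le> R" "2 * R < norm w"
  shows "norm (z - w) \<ge> norm w / 2" "norm (z - w) > 0" "norm w > 0"
proof -
  have "norm w - norm z \<le> norm (z - w)" using norm_triangle_ineq2[of w z] by (simp add: norm_minus_commute)
  moreover have "R \<ge> 0" using assms(1) norm_ge_zero order_trans by blast
  ultimately show "norm (z - w) \<ge> norm w / 2" using assms by linarith
  thus "norm (z - w) > 0" "norm w > 0" using assms \<open>R \<ge> 0\<close> by linarith+
qed

lemma norm_log_term_le:
  assumes "i \<in> far_idx R" "norm z \<le> R"
  shows "norm (log_term i z) \<le> 2 * R ^ 3 / norm (\<omega> i) ^ 3"
proof -
  have w: "2 * R < norm (\<omega> i)" using far_idxD[OF assms(1)] .
  have R0: "R \<ge> 0" using assms(2) norm_ge_zero order_trans by blast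
  have wp: "norm (\<omega> i) > 0" using w R0 by linarith
  have t: "norm (z / \<omega> i) \<le> 1/2"
    using assms(2) w wp by (simp add: norm_divide field_simps)
  have "norm (log_term i z) \<le> 2 * norm (z / \<omega> i) ^ 3" unfolding log_term_def by (rule log_elem_factor_bound[OF t])
  also have "\<dots> = 2 * norm z ^ 3 / norm (\<omega> i) ^ 3" by (simp add: norm_divide power_divide)
  also have "\<dots> \<le> 2 * R ^ 3 / norm (\<omega> i) ^ 3"
    using assms(2) wp by (intro divide_right_mono mult_left_mono power_mono) auto
  finally show ?thesis .
qed

lemma norm_zeta_term_le:
  assumes "i \<in> far_idx R" "norm z \<le> R"
  shows "norm (zeta_term i z) \<le> 2 * R ^ 2 / norm (\<omega> i) ^ 3"
proof -
  have w: "2 * R < norm (\<omega> i)" using far_idxD[OF assms(1)] .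
  note f = far_bounds[OF assms(2) w]
  have "norm (zeta_term i z) = norm z ^ 2 / (norm (\<omega> i) ^ 2 * norm (z - \<omega> i))"
    by (simp add: zeta_term_def norm_divide norm_mult norm_power)
  also have "\<dots> \<le> R ^ 2 / (norm (\<omega> i) ^ 2 * (norm (\<omega> i) / 2))"
    by (rule frac_le) (use f assms(2) in \<open>auto intro!: power_mono mult_left_mono\<close>)
  also have "\<dots> = 2 * R ^ 2 / norm (\<omega> i) ^ 3"
    using f by (simp add: field_simps power3_eq_cube power2_eq_square)
  finally show ?thesis .
qed

lemma norm_dzeta_term_le:
  assumes "i \<in> far_idx R" "norm z \<le> R"
  shows "norm (dzeta_term i z) \<le> 10 * R / norm (\<omega> i) ^ 3"
proof -
  have w: "2 * R < norm (\<omega> i)" using far_idxD[OF assms(1)] .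
  note f = far_bounds[OF assms(2) w]
  have R0: "R \<ge> 0" using assms(2) norm_ge_zero order_trans by blast
  have ne: "z - \<omega> i \<noteq> 0" "\<omega> i \<noteq> 0" using f by auto
  have "dzeta_term i z = (1 * (z - \<omega> i)\<^sup>2 - 1 * (\<omega> i)\<^sup>2) / ((\<omega> i)\<^sup>2 * (z - \<omega> i)\<^sup>2)"
    unfolding dzeta_term_def by (rule diff_frac_eq) (use ne in simp_all)
  also have "1 * (z - \<omega> i)\<^sup>2 - 1 * (\<omega> i)\<^sup>2 = z * (z - 2 * \<omega> i)"
    by (simp add: power2_eq_square algebra_simps)
  finally have "dzeta_term i z = z * (z - 2 * \<omega> i) / ((\<omega> i)\<^sup>2 * (z - \<omega> i)\<^sup>2)" .
  hence "norm (dzeta_term i z) = norm z * norm (z - 2 * \<omega> i) / (norm (\<omega> i) ^ 2 * norm (z - \<omega> i) ^ 2)"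
    by (simp add: norm_divide norm_mult norm_power)
  also have "\<dots> \<le> (R * (5/2 * norm (\<omega> i))) / (norm (\<omega> i) ^ 2 * (norm (\<omega> i) / 2) ^ 2)"
  proof (rule frac_le)
    have "norm (z - 2 * \<omega> i) \<le> norm z + norm (2 * \<omega> i)" by (rule norm_triangle_ineq4)
    also have "\<dots> \<le> 5/2 * norm (\<omega> i)" using assms(2) w by (simp add: norm_mult)
    finally have "norm (z - 2 * \<omega> i) \<le> 5/2 * norm (\<omega> i)" .
    thus "norm z * norm (z - 2 * \<omega> i) \<le> R * (5/2 * norm (\<omega> i))"
      using assms(2) R0 by (intro mult_mono) auto
    show "0 \<le> R * (5/2 * norm (\<omega> i))" using R0 by simp
    show "0 < norm (\<omega> i) ^ 2 * (norm (\<omega> i) / 2) ^ 2" using f by simp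
    show "norm (\<omega> i) ^ 2 * (norm (\<omega> i) / 2) ^ 2 \<le> norm (\<omega> i) ^ 2 * norm (z - \<omega> i) ^ 2"
      using f by (intro mult_left_mono power_mono) auto
  qed
  also have "\<dots> = 10 * R / norm (\<omega> i) ^ 3"
    using f by (simp add: field_simps power3_eq_cube power2_eq_square)
  finally show ?thesis .
qed

lemma norm_d2zeta_term_le:
  assumes "i \<in> far_idx R" "norm z \<le> R"
  shows "norm (d2zeta_term i z) \<le> 16 / norm (\<omega> i) ^ 3"
proof -
  have w: "2 * R < norm (\<omega> i)" using far_idxD[OF assms(1)] .
  note f = far_bounds[OF assms(2) w]
  have "norm (d2zeta_term i z) = 2 / norm (z - \<omega> i) ^ 3"
    by (simp add: d2zeta_term_def norm_divide norm_power)
  also have "\<dots> \<le> 2 / (norm (\<omega> i) / 2) ^ 3"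
    by (rule frac_le) (use f in \<open>auto intro!: power_mono\<close>)
  also have "\<dots> = 16 / norm (\<omega> i) ^ 3"
    by (simp add: field_simps power3_eq_cube)
  finally show ?thesis .
qed

lemma has_field_derivative_log_term:
  assumes "i \<in> far_idx R" "norm z \<le> R"
  shows "(log_term i has_field_derivative zeta_term i z) (at z)"
proof -
  have w: "2 * R < norm (\<omega> i)" using far_idxD[OF assms(1)] .
  note f = far_bounds[OF assms(2) w]
  have R0: "R \<ge> 0" using assms(2) norm_ge_zero order_trans by blast
  have ne: "z - \<omega> i \<noteq> 0" "\<omega> i \<noteq> 0" using f by auto
  have "norm z < norm (\<omega> i)" using assms(2) w R0 by linarith
  hence t: "norm (z / \<omega> i) < 1"
    using f by (simp add: norm_divide field_simps)
  have "((\<lambda>z. log_elem_factor (z / \<omega> i)) has_field_derivative (- ((z / \<omega> i)\<^sup>2) / (1 - z / \<omega> i)) * (1 / \<omega> i)) (at z)"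
    by (rule DERIV_chain2[where g = "\<lambda>z. z / \<omega> i" and x = z, OF has_field_derivative_log_elem_factor[OF t]])
       (use ne in \<open>auto intro!: derivative_eq_intros\<close>)
  moreover have "(- ((z / \<omega> i)\<^sup>2) / (1 - z / \<omega> i)) * (1 / \<omega> i) = zeta_term i z"
  proof -
    have a: "1 - z / \<omega> i = - (z - \<omega> i) / \<omega> i" using ne by (simp add: field_simps)
    show ?thesis unfolding a zeta_term_def using ne by (simp add: field_simps power2_eq_square)
  qed
  ultimately show ?thesis unfolding log_term_def[abs_def] by simp
qed

lemma has_field_derivative_zeta_term:
  assumes "z \<noteq> \<omega> i" "\<omega> i \<noteq> 0"
  shows "(zeta_term i has_field_derivative dzeta_term i z) (at z)"
proof -
  define u where "u = z - \<omega> i"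
  have "u \<noteq> 0" "z = u + \<omega> i" using assms(1) by (auto simp: u_def)
  thus ?thesis using assms(2) unfolding zeta_term_def[abs_def] dzeta_term_def
    by (auto intro!: derivative_eq_intros simp: field_simps power2_eq_square)
qed

lemma has_field_derivative_dzeta_term:
  assumes "z \<noteq> \<omega> i"
  shows "(dzeta_term i has_field_derivative d2zeta_term i z) (at z)"
proof -
  define u where "u = z - \<omega> i"
  have "u \<noteq> 0" "z = u + \<omega> i" using assms by (auto simp: u_def)
  thus ?thesis unfolding dzeta_term_def[abs_def] d2zeta_term_def
    by (auto intro!: derivative_eq_intros simp: field_simps power2_eq_square power3_eq_cube)
qed

section \<open>The Weierstrass functions\<close>

definition log_tail :: "real \<Rightarrow> complex \<Rightarrow> complex" where "log_tail R z = infsum (\<lambda>i. log_term i z) (far_idx R)"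
definition wzeta :: "complex \<Rightarrow> complex" where "wzeta z = 1 / z + infsum (\<lambda>i. zeta_term i z) nonzero_idx"
definition wp_reg :: "complex \<Rightarrow> complex" where "wp_reg z = infsum (\<lambda>i. - dzeta_term i z) nonzero_idx"
definition wp_deriv :: "complex \<Rightarrow> complex" where "wp_deriv z = - 2 * infsum (\<lambda>i. 1 / (z - \<omega> i) ^ 3) UNIV"

lemma summable_log_term: "norm z \<le> R \<Longrightarrow> (\<lambda>i. log_term i z) summable_on far_idx R"
  by (rule summable_on_cube_bound[OF far_idx_subset, where C = "2 * R ^ 3"]) (rule norm_log_term_le)
lemma summable_zeta_term: "norm z \<le> R \<Longrightarrow> (\<lambda>i. zeta_term i z) summable_on far_idx R"
  by (rule summable_on_cube_bound[OF far_idx_subset, where C = "2 * R ^ 2"]) (rule norm_zeta_term_le)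
lemma summable_dzeta_term: "norm z \<le> R \<Longrightarrow> (\<lambda>i. dzeta_term i z) summable_on far_idx R"
  by (rule summable_on_cube_bound[OF far_idx_subset, where C = "10 * R"]) (rule norm_dzeta_term_le)
lemma summable_d2zeta_term: "norm z \<le> R \<Longrightarrow> (\<lambda>i. d2zeta_term i z) summable_on far_idx R"
  by (rule summable_on_cube_bound[OF far_idx_subset, where C = "16"]) (rule norm_d2zeta_term_le)

lemma summable_on_nonzero_idx:
  fixes f :: "int \<times> int \<Rightarrow> complex"
  assumes "\<And>R. norm z \<le> R \<Longrightarrow> f summable_on far_idx R"
  shows "f summable_on nonzero_idx"
proof -
  have "f summable_on (near_idx (norm z) \<union> far_idx (norm z))"
    by (rule summable_on_union) (use assms finite_near_idx in auto)
  thus ?thesis by (simp add: near_far_union)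
qed

lemma infsum_nonzero_idx_split:
  fixes f :: "int \<times> int \<Rightarrow> complex"
  assumes "f summable_on far_idx R"
  shows "infsum f nonzero_idx = sum f (near_idx R) + infsum f (far_idx R)"
proof -
  have "infsum f (near_idx R \<union> far_idx R) = infsum f (near_idx R) + infsum f (far_idx R)"
    by (rule infsum_Un_disjoint) (use assms finite_near_idx near_far_disjoint in auto)
  thus ?thesis by (simp add: near_far_union finite_near_idx)
qed

lemma summable_dzeta_term_nonzero: "(\<lambda>i. dzeta_term i z) summable_on nonzero_idx"
  by (rule summable_on_nonzero_idx) (rule summable_dzeta_term)
lemma summable_d2zeta_term_nonzero: "(\<lambda>i. d2zeta_term i z) summable_on nonzero_idx"
  by (rule summable_on_nonzero_idx) (rule summable_d2zeta_term)

lemma has_field_derivative_log_tail: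
  assumes "R > 0" "z \<in> ball 0 R"
  shows "(log_tail R has_field_derivative infsum (\<lambda>i. zeta_term i z) (far_idx R)) (at z)"
  unfolding log_tail_def[abs_def]
  by (rule has_field_derivative_infsum[OF far_idx_subset assms(1), where f = log_term
        and C = "2 * R ^ 3" and f' = zeta_term and C' = "2 * R ^ 2",
        OF norm_log_term_le _ has_field_derivative_log_term assms(2)])
     (auto intro: norm_zeta_term_le)

lemma has_field_derivative_zeta_tail:
  assumes "R > 0" "z \<in> ball 0 R"
  shows "((\<lambda>z. infsum (\<lambda>i. zeta_term i z) (far_idx R)) has_field_derivative infsum (\<lambda>i. dzeta_term i z) (far_idx R)) (at z)"
proof (rule has_field_derivative_infsum[OF far_idx_subset assms(1), where f = zeta_term
    and C = "2 * R ^ 2" and f' = dzeta_term and C' = "10 * R", OF norm_zeta_term_le _ _ assms(2)])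
  fix i u assume iu: "i \<in> far_idx R" "u \<in> cball (0::complex) R"
  have f: "norm (u - \<omega> i) > 0" "norm (\<omega> i) > 0" using far_bounds[OF _ far_idxD[OF iu(1)], of u] iu(2) by auto
  show "(zeta_term i has_field_derivative dzeta_term i u) (at u)" by (rule has_field_derivative_zeta_term) (use f in auto)
qed (auto intro: norm_dzeta_term_le)

lemma has_field_derivative_dzeta_tail:
  assumes "R > 0" "z \<in> ball 0 R"
  shows "((\<lambda>z. infsum (\<lambda>i. dzeta_term i z) (far_idx R)) has_field_derivative infsum (\<lambda>i. d2zeta_term i z) (far_idx R)) (at z)"
proof (rule has_field_derivative_infsum[OF far_idx_subset assms(1), where f = dzeta_term
    and C = "10 * R" and f' = d2zeta_term and C' = 16, OF norm_dzeta_term_le _ _ assms(2)])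
  fix i u assume iu: "i \<in> far_idx R" "u \<in> cball (0::complex) R"
  have f: "norm (u - \<omega> i) > 0" using far_bounds[OF _ far_idxD[OF iu(1)], of u] iu(2) by auto
  show "(dzeta_term i has_field_derivative d2zeta_term i u) (at u)" by (rule has_field_derivative_dzeta_term) (use f in auto)
qed (auto intro: norm_d2zeta_term_le)

lemma has_field_derivative_elem_factor_lat:
  assumes "z \<noteq> \<omega> i" "\<omega> i \<noteq> 0"
  shows "((\<lambda>z. elem_factor (z / \<omega> i)) has_field_derivative elem_factor (z / \<omega> i) * zeta_term i z) (at z)"
proof -
  have d: "((\<lambda>z. elem_factor (z / \<omega> i)) has_field_derivative
      (- ((z / \<omega> i)\<^sup>2) * exp (z / \<omega> i + (z / \<omega> i)\<^sup>2 / 2)) * (1 / \<omega> i)) (at z)"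
    by (rule DERIV_chain2[where g = "\<lambda>z. z / \<omega> i" and x = z, OF has_field_derivative_elem_factor])
       (use assms in \<open>auto intro!: derivative_eq_intros\<close>)
  have "z - \<omega> i \<noteq> 0" using assms(1) by simp
  hence a: "- ((z / \<omega> i)\<^sup>2) * (1 / \<omega> i) = (1 - z / \<omega> i) * zeta_term i z"
    using assms(2) unfolding zeta_term_def by (simp add: field_simps power2_eq_square)
  have "(- ((z / \<omega> i)\<^sup>2) * exp (z / \<omega> i + (z / \<omega> i)\<^sup>2 / 2)) * (1 / \<omega> i) =
      (- ((z / \<omega> i)\<^sup>2) * (1 / \<omega> i)) * exp (z / \<omega> i + (z / \<omega> i)\<^sup>2 / 2)"
    by (simp only: mult_ac)
  also have "\<dots> = elem_factor (z / \<omega> i) * zeta_term i z"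
    unfolding a elem_factor_def by (simp only: mult_ac)
  finally have "(- ((z / \<omega> i)\<^sup>2) * exp (z / \<omega> i + (z / \<omega> i)\<^sup>2 / 2)) * (1 / \<omega> i) = elem_factor (z / \<omega> i) * zeta_term i z" .
  with d show ?thesis by simp
qed

lemma lat_pt_in_lattice: "\<omega> i \<in> \<Lambda>" by (simp add: \<Lambda>_def)
lemma zero_in_lattice: "0 \<in> \<Lambda>" using lat_pt_in_lattice[of "(0,0)"] by (simp add: lat_pt_def)

lemma lat_box_product_split:
  assumes z: "norm z \<le> R" and N: "near_idx R \<subseteq> lat_box N"
  shows "(\<Prod>i\<in>lat_box N. elem_factor (z / \<omega> i)) =
    (\<Prod>i\<in>near_idx R. elem_factor (z / \<omega> i)) * exp (\<Sum>i\<in>far_idx R \<inter> lat_box N. log_term i z)"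
proof -
  have un: "lat_box N = near_idx R \<union> (far_idx R \<inter> lat_box N)"
    using N lat_box_subset_nonzero[of N] near_far_union[of R] by auto
  have fin: "finite (far_idx R \<inter> lat_box N)" using finite_lat_box by auto
  have "exp (\<Sum>i\<in>far_idx R \<inter> lat_box N. log_term i z) = (\<Prod>i\<in>far_idx R \<inter> lat_box N. exp (log_term i z))"
    by (rule exp_sum[OF fin])
  also have "\<dots> = (\<Prod>i\<in>far_idx R \<inter> lat_box N. elem_factor (z / \<omega> i))"
  proof (rule prod.cong[OF refl])
    fix i assume "i \<in> far_idx R \<inter> lat_box N"
    hence w: "2 * R < norm (\<omega> i)" using far_idxD by auto
    hence "norm z < norm (\<omega> i)" using z norm_ge_zero[of z] by linarith
    hence "norm (z / \<omega> i) < 1" using far_bounds(3)[OF z w] by (simp add: norm_divide field_simps)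
    thus "exp (log_term i z) = elem_factor (z / \<omega> i)" by (simp add: log_term_def elem_factor_eq_exp)
  qed
  finally show ?thesis
    by (subst un, subst prod.union_disjoint) (use finite_near_idx fin near_far_disjoint[of R] in auto)
qed

lemma sigma_partial_products_tendsto:
  assumes R: "R > 0" and z: "norm z \<le> R"
  shows "(\<lambda>N. z * (\<Prod>i\<in>lat_box N. elem_factor (z / \<omega> i))) \<longlonglongrightarrow>
    z * (\<Prod>i\<in>near_idx R. elem_factor (z / \<omega> i)) * exp (log_tail R z)"
proof -
  obtain N0 where N0: "near_idx R \<subseteq> lat_box N0"
    using finite_subset_lat_box[OF finite_near_idx, of R] by (auto simp: near_idx_def)
  have "((\<lambda>i. log_term i z) has_sum log_tail R z) (far_idx R)"
    unfolding log_tail_def by (rule has_sum_infsum[OF summable_log_term[OF z]])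
  hence "(\<lambda>N. z * (\<Prod>i\<in>near_idx R. elem_factor (z / \<omega> i)) * exp (\<Sum>i\<in>far_idx R \<inter> lat_box N. log_term i z))
      \<longlonglongrightarrow> z * (\<Prod>i\<in>near_idx R. elem_factor (z / \<omega> i)) * exp (log_tail R z)"
    by (intro tendsto_intros tendsto_sum_lat_box far_idx_subset)
  moreover have "\<forall>\<^sub>F N in sequentially. z * (\<Prod>i\<in>near_idx R. elem_factor (z / \<omega> i)) *
      exp (\<Sum>i\<in>far_idx R \<inter> lat_box N. log_term i z) = z * (\<Prod>i\<in>lat_box N. elem_factor (z / \<omega> i))"
    using eventually_ge_at_top[of N0]
  proof eventually_elim
    case (elim N)
    hence "near_idx R \<subseteq> lat_box N" using N0 lat_box_mono by blast
    thus ?case by (simp add: lat_box_product_split[OF z] mult.assoc)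
  qed
  ultimately show ?thesis by (rule Lim_transform_eventually)
qed

lemma sigma_eq_lim: "\<sigma> z = lim (\<lambda>N. z * (\<Prod>i\<in>lat_box N. elem_factor (z / \<omega> i)))"
proof -
  have eqf: "(\<lambda>(m,n). let w = lat_pt w1 w2 m n in (1 - z / w) * exp (z / w + z\<^sup>2 / (2 * w\<^sup>2))) = (\<lambda>i. elem_factor (z / \<omega> i))"
    by (auto simp: fun_eq_iff elem_factor_def Let_def power_divide mult.commute)
  show ?thesis unfolding wsigma_def eqf ..
qed

lemma sigma_near_far:
  assumes R: "R > 0" and z: "norm z \<le> R"
  shows "\<sigma> z = z * (\<Prod>i\<in>near_idx R. elem_factor (z / \<omega> i)) * exp (log_tail R z)"
  unfolding sigma_eq_lim by (rule limI[OF sigma_partial_products_tendsto[OF assms]])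

lemma sigma_LIMSEQ: "(\<lambda>N. z * (\<Prod>i\<in>lat_box N. elem_factor (z / \<omega> i))) \<longlonglongrightarrow> \<sigma> z"
proof -
  have R: "norm z + 1 > 0" by (rule add_nonneg_pos) auto
  show ?thesis using sigma_partial_products_tendsto[OF R, of z] sigma_near_far[OF R, of z] by simp
qed

lemma wp_eq_wp_reg: "\<P> z = 1 / z\<^sup>2 + wp_reg z"
proof -
  have eqf: "(\<lambda>(m,n). let w = lat_pt w1 w2 m n in 1 / (z - w)\<^sup>2 - 1 / w\<^sup>2) = (\<lambda>i. - dzeta_term i z)"
    by (auto simp: fun_eq_iff dzeta_term_def Let_def)
  have hs: "((\<lambda>i. - dzeta_term i z) has_sum wp_reg z) nonzero_idx"
    unfolding wp_reg_def by (rule has_sum_infsum) (simp add: summable_on_uminus summable_dzeta_term_nonzero)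
  have "(\<lambda>N. \<Sum>i\<in>nonzero_idx \<inter> lat_box N. - dzeta_term i z) \<longlonglongrightarrow> wp_reg z"
    by (rule tendsto_sum_lat_box[OF hs]) simp
  moreover have "nonzero_idx \<inter> lat_box N = lat_box N" for N using lat_box_subset_nonzero by auto
  ultimately have "lim (\<lambda>N. \<Sum>i\<in>lat_box N. - dzeta_term i z) = wp_reg z" by (intro limI) simp
  thus ?thesis unfolding wp_def eqf by simp
qed

lemma notin_lattice_neq: "z \<notin> \<Lambda> \<Longrightarrow> z \<noteq> \<omega> i" "z \<notin> \<Lambda> \<Longrightarrow> z \<noteq> 0"
  using lat_pt_in_lattice zero_in_lattice by auto

lemma has_field_derivative_near_product:
  assumes "\<And>i. i \<in> near_idx R \<Longrightarrow> z \<noteq> \<omega> i"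
  shows "((\<lambda>u. \<Prod>i\<in>near_idx R. elem_factor (u / \<omega> i)) has_field_derivative
    (\<Prod>i\<in>near_idx R. elem_factor (z / \<omega> i)) * (\<Sum>i\<in>near_idx R. zeta_term i z)) (at z)"
proof -
  have nz: "\<omega> i \<noteq> 0" "elem_factor (z / \<omega> i) \<noteq> 0" if "i \<in> near_idx R" for i
    using that assms[OF that] by (auto simp: near_idx_def lat_pt_nonzero elem_factor_nonzero)
  have "((\<lambda>u. \<Prod>i\<in>near_idx R. elem_factor (u / \<omega> i)) has_field_derivative
      (\<Prod>i\<in>near_idx R. elem_factor (z / \<omega> i)) *
      (\<Sum>i\<in>near_idx R. elem_factor (z / \<omega> i) * zeta_term i z / elem_factor (z / \<omega> i))) (at z)"
    by (rule has_field_derivative_prod') (simp_all add: nz assms has_field_derivative_elem_factor_lat)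
  moreover have "(\<Sum>i\<in>near_idx R. elem_factor (z / \<omega> i) * zeta_term i z / elem_factor (z / \<omega> i)) =
      (\<Sum>i\<in>near_idx R. zeta_term i z)"
    using nz by (intro sum.cong) auto
  ultimately show ?thesis by simp
qed

lemma has_field_derivative_sigma:
  assumes z: "z \<notin> \<Lambda>"
  shows "(\<sigma> has_field_derivative \<sigma> z * wzeta z) (at z)"
proof -
  define R where "R = norm z + 1"
  have R: "R > 0" unfolding R_def by (rule add_nonneg_pos) auto
  have zR: "z \<in> ball 0 R" and zR': "norm z \<le> R" by (auto simp: R_def)
  have z0: "z \<noteq> 0" using notin_lattice_neq(2)[OF z] .
  define Pr where "Pr u = (\<Prod>i\<in>near_idx R. elem_factor (u / \<omega> i))" for u
  define S1 where "S1 = (\<Sum>i\<in>near_idx R. zeta_term i z)"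
  define EL where "EL = infsum (\<lambda>i. zeta_term i z) (far_idx R)"
  have dP: "(Pr has_field_derivative Pr z * S1) (at z)"
    unfolding Pr_def[abs_def] S1_def using notin_lattice_neq(1)[OF z] by (rule has_field_derivative_near_product)
  have dE: "(log_tail R has_field_derivative EL) (at z)" unfolding EL_def by (rule has_field_derivative_log_tail[OF R zR])
  have dF: "((\<lambda>u. u * Pr u * exp (log_tail R u)) has_field_derivative
      (Pr z + z * (Pr z * S1)) * exp (log_tail R z) + z * Pr z * (exp (log_tail R z) * EL)) (at z)"
    using dP dE by (auto intro!: derivative_eq_intros simp: algebra_simps)
  have zeq: "wzeta z = 1 / z + S1 + EL"
    unfolding wzeta_def S1_def EL_def using infsum_nonzero_idx_split[OF summable_zeta_term[OF zR']] by simp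
  have sz: "\<sigma> z = z * Pr z * exp (log_tail R z)" unfolding Pr_def by (rule sigma_near_far[OF R zR'])
  have "(Pr z + z * (Pr z * S1)) * exp (log_tail R z) + z * Pr z * (exp (log_tail R z) * EL) = \<sigma> z * wzeta z"
    unfolding sz zeq using z0 by (simp add: field_simps)
  with dF have dF': "((\<lambda>u. u * Pr u * exp (log_tail R u)) has_field_derivative \<sigma> z * wzeta z) (at z)" by simp
  show ?thesis
  proof (rule has_field_derivative_transform_within_open[OF dF' _ zR])
    fix u :: complex assume "u \<in> ball 0 R"
    thus "u * Pr u * exp (log_tail R u) = \<sigma> u" unfolding Pr_def by (intro sigma_near_far[symmetric] R) auto
  qed simp
qed

lemma sigma_holomorphic_ball:
  assumes R: "R > 0"
  shows "\<sigma> holomorphic_on ball 0 R"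
proof -
  have hE: "log_tail R holomorphic_on ball 0 R"
    unfolding holomorphic_on_open[OF open_ball] using has_field_derivative_log_tail[OF R] by blast
  have "(\<lambda>u. u * (\<Prod>i\<in>near_idx R. elem_factor (u / \<omega> i)) * exp (log_tail R u)) holomorphic_on ball 0 R"
    unfolding elem_factor_def by (intro holomorphic_intros hE) (auto simp: near_idx_def lat_pt_nonzero)
  thus ?thesis
    by (rule holomorphic_transform) (use R in \<open>auto intro!: sigma_near_far[symmetric]\<close>)
qed

lemma sigma_holomorphic: "\<sigma> holomorphic_on UNIV"
proof -
  have "\<sigma> field_differentiable (at z)" for z
  proof -
    have "\<sigma> holomorphic_on ball 0 (norm z + 1)" by (rule sigma_holomorphic_ball) (rule add_nonneg_pos, auto)
    thus ?thesis by (rule holomorphic_on_imp_differentiable_at) auto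
  qed
  thus ?thesis by (simp add: holomorphic_on_def field_differentiable_at_within)
qed

lemma sigma_nonzero:
  assumes z: "z \<notin> \<Lambda>"
  shows "\<sigma> z \<noteq> 0"
proof -
  define R where "R = norm z + 1"
  have R: "R > 0" unfolding R_def by (rule add_nonneg_pos) auto
  have zR': "norm z \<le> R" by (auto simp: R_def)
  have "\<forall>i\<in>near_idx R. elem_factor (z / \<omega> i) \<noteq> 0"
  proof
    fix i assume "i \<in> near_idx R"
    hence "\<omega> i \<noteq> 0" by (simp add: near_idx_def lat_pt_nonzero)
    thus "elem_factor (z / \<omega> i) \<noteq> 0" using notin_lattice_neq(1)[OF z, of i] by (intro elem_factor_nonzero) auto
  qed
  thus ?thesis using sigma_near_far[OF R zR'] notin_lattice_neq(2)[OF z] finite_near_idx by simp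
qed

lemma sigma_0: "\<sigma> 0 = 0"
  by (simp add: wsigma_def)

lemma has_field_derivative_wzeta:
  assumes z: "z \<notin> \<Lambda>"
  shows "(wzeta has_field_derivative - \<P> z) (at z)"
proof -
  define R where "R = norm z + 1"
  have R: "R > 0" unfolding R_def by (rule add_nonneg_pos) auto
  have zR: "z \<in> ball 0 R" and zR': "norm z \<le> R" by (auto simp: R_def)
  have z0: "z \<noteq> 0" using notin_lattice_neq(2)[OF z] .
  have omnz: "i \<in> near_idx R \<Longrightarrow> \<omega> i \<noteq> 0" for i by (simp add: near_idx_def lat_pt_nonzero)
  have d: "((\<lambda>u. 1 / u + (\<Sum>i\<in>near_idx R. zeta_term i u) + infsum (\<lambda>i. zeta_term i u) (far_idx R)) has_field_derivative
      - 1 / z\<^sup>2 + (\<Sum>i\<in>near_idx R. dzeta_term i z) + infsum (\<lambda>i. dzeta_term i z) (far_idx R)) (at z)"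
    using z0 omnz notin_lattice_neq(1)[OF z] has_field_derivative_zeta_tail[OF R zR]
    by (auto intro!: derivative_eq_intros DERIV_sum has_field_derivative_zeta_term simp: power2_eq_square)
  have "- 1 / z\<^sup>2 + (\<Sum>i\<in>near_idx R. dzeta_term i z) + infsum (\<lambda>i. dzeta_term i z) (far_idx R) =
      - 1 / z\<^sup>2 + infsum (\<lambda>i. dzeta_term i z) nonzero_idx"
    using infsum_nonzero_idx_split[OF summable_dzeta_term[OF zR']] by simp
  also have "\<dots> = - \<P> z" by (simp add: wp_eq_wp_reg wp_reg_def infsum_uminus)
  finally have d': "((\<lambda>u. 1 / u + (\<Sum>i\<in>near_idx R. zeta_term i u) + infsum (\<lambda>i. zeta_term i u) (far_idx R))
      has_field_derivative - \<P> z) (at z)"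
    using d by simp
  show ?thesis
  proof (rule has_field_derivative_transform_within_open[OF d' _ zR])
    fix u :: complex assume "u \<in> ball 0 R"
    hence "norm u \<le> R" by simp
    thus "1 / u + (\<Sum>i\<in>near_idx R. zeta_term i u) + infsum (\<lambda>i. zeta_term i u) (far_idx R) = wzeta u"
      unfolding wzeta_def using infsum_nonzero_idx_split[OF summable_zeta_term] by (simp add: add.assoc)
  qed simp
qed

lemma has_field_derivative_wp_reg:
  assumes z: "\<And>i. i \<in> nonzero_idx \<Longrightarrow> z \<noteq> \<omega> i"
  shows "(wp_reg has_field_derivative - infsum (\<lambda>i. d2zeta_term i z) nonzero_idx) (at z)"
proof -
  define R where "R = norm z + 1"
  have R: "R > 0" unfolding R_def by (rule add_nonneg_pos) auto
  have zR: "z \<in> ball 0 R" and zR': "norm z \<le> R" by (auto simp: R_def)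
  have SI: "near_idx R \<subseteq> nonzero_idx" by (auto simp: near_idx_def)
  have d: "((\<lambda>u. - ((\<Sum>i\<in>near_idx R. dzeta_term i u) + infsum (\<lambda>i. dzeta_term i u) (far_idx R))) has_field_derivative
      - ((\<Sum>i\<in>near_idx R. d2zeta_term i z) + infsum (\<lambda>i. d2zeta_term i z) (far_idx R))) (at z)"
    using z SI has_field_derivative_dzeta_tail[OF R zR]
    by (auto intro!: derivative_eq_intros DERIV_sum has_field_derivative_dzeta_term)
  have "- ((\<Sum>i\<in>near_idx R. d2zeta_term i z) + infsum (\<lambda>i. d2zeta_term i z) (far_idx R)) =
      - infsum (\<lambda>i. d2zeta_term i z) nonzero_idx"
    using infsum_nonzero_idx_split[OF summable_d2zeta_term[OF zR']] by simp
  with d have d': "((\<lambda>u. - ((\<Sum>i\<in>near_idx R. dzeta_term i u) + infsum (\<lambda>i. dzeta_term i u) (far_idx R))) has_field_derivative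
      - infsum (\<lambda>i. d2zeta_term i z) nonzero_idx) (at z)" by simp
  show ?thesis
  proof (rule has_field_derivative_transform_within_open[OF d' _ zR])
    fix u :: complex assume "u \<in> ball 0 R"
    hence "norm u \<le> R" by simp
    thus "- ((\<Sum>i\<in>near_idx R. dzeta_term i u) + infsum (\<lambda>i. dzeta_term i u) (far_idx R)) = wp_reg u"
      unfolding wp_reg_def using infsum_nonzero_idx_split[OF summable_dzeta_term] by (simp add: infsum_uminus)
  qed simp
qed

lemma wp_deriv_eq: "wp_deriv z = - 2 / z ^ 3 - infsum (\<lambda>i. d2zeta_term i z) nonzero_idx"
proof -
  have e: "(\<lambda>i. d2zeta_term i z) = (\<lambda>i. 2 * (1 / (z - \<omega> i) ^ 3))" by (simp add: d2zeta_term_def fun_eq_iff)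
  have s: "(\<lambda>i. 1 / (z - \<omega> i) ^ 3) summable_on nonzero_idx"
  proof -
    have "(\<lambda>i. 1/2 * d2zeta_term i z) summable_on nonzero_idx" by (intro summable_on_cmult_right summable_d2zeta_term_nonzero)
    thus ?thesis by (simp add: d2zeta_term_def)
  qed
  have U: "UNIV = insert (0,0) nonzero_idx" by (auto simp: nonzero_idx_def)
  have "infsum (\<lambda>i. 1 / (z - \<omega> i) ^ 3) UNIV = 1 / z ^ 3 + infsum (\<lambda>i. 1 / (z - \<omega> i) ^ 3) nonzero_idx"
    by (subst U, subst infsum_insert[OF s]) (auto simp: nonzero_idx_def lat_pt_def)
  moreover have "infsum (\<lambda>i. d2zeta_term i z) nonzero_idx = 2 * infsum (\<lambda>i. 1 / (z - \<omega> i) ^ 3) nonzero_idx"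
    unfolding e by (rule infsum_cmult_right) (use s in auto)
  ultimately show ?thesis by (simp add: wp_deriv_def algebra_simps)
qed

lemma has_field_derivative_wp:
  assumes z: "z \<notin> \<Lambda>"
  shows "(\<P> has_field_derivative wp_deriv z) (at z)"
proof -
  have z0: "z \<noteq> 0" using notin_lattice_neq(2)[OF z] .
  have d: "((\<lambda>u. 1 / u\<^sup>2 + wp_reg u) has_field_derivative - 2 / z ^ 3 - infsum (\<lambda>i. d2zeta_term i z) nonzero_idx) (at z)"
    using z0 has_field_derivative_wp_reg[of z] notin_lattice_neq(1)[OF z]
    by (auto intro!: derivative_eq_intros simp: power2_eq_square power3_eq_cube field_simps)
  show ?thesis using d unfolding wp_deriv_eq[symmetric] by (simp add: wp_eq_wp_reg[abs_def])
qed

section \<open>Parity and periodicity\<close>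

definition idx_neg :: "int \<times> int \<Rightarrow> int \<times> int" where "idx_neg i = (- fst i, - snd i)"
definition idx_shift :: "int \<times> int \<Rightarrow> int \<times> int \<Rightarrow> int \<times> int" where "idx_shift k i = (fst i + fst k, snd i + snd k)"

lemma lat_pt_idx_neg: "\<omega> (idx_neg i) = - \<omega> i" by (simp add: idx_neg_def lat_pt_def algebra_simps)
lemma lat_pt_idx_shift: "\<omega> (idx_shift k i) = \<omega> i + \<omega> k" by (simp add: idx_shift_def lat_pt_def algebra_simps)

lemma bij_idx_neg_lat_box: "bij_betw idx_neg (lat_box N) (lat_box N)"
  by (rule bij_betw_byWitness[where f' = idx_neg]) (auto simp: idx_neg_def lat_box_def)

lemma bij_idx_shift: "bij_betw (idx_shift k) UNIV UNIV"
  by (rule bij_betw_byWitness[where f' = "idx_shift (- fst k, - snd k)"]) (auto simp: idx_shift_def)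

lemma sigma_minus: "\<sigma> (- z) = - \<sigma> z"
proof -
  have "(\<lambda>N. (- z) * (\<Prod>i\<in>lat_box N. elem_factor ((- z) / \<omega> i))) = (\<lambda>N. - (z * (\<Prod>i\<in>lat_box N. elem_factor (z / \<omega> i))))"
  proof
    fix N
    have "(\<Prod>i\<in>lat_box N. elem_factor ((- z) / \<omega> i)) = (\<Prod>i\<in>lat_box N. elem_factor ((- z) / \<omega> (idx_neg i)))"
      by (rule prod.reindex_bij_betw[OF bij_idx_neg_lat_box, symmetric])
    also have "\<dots> = (\<Prod>i\<in>lat_box N. elem_factor (z / \<omega> i))" by (simp add: lat_pt_idx_neg)
    finally show "(- z) * (\<Prod>i\<in>lat_box N. elem_factor ((- z) / \<omega> i)) = - (z * (\<Prod>i\<in>lat_box N. elem_factor (z / \<omega> i)))" by simp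
  qed
  moreover have "(\<lambda>N. - (z * (\<Prod>i\<in>lat_box N. elem_factor (z / \<omega> i)))) \<longlonglongrightarrow> - \<sigma> z"
    by (intro tendsto_minus sigma_LIMSEQ)
  ultimately have "(\<lambda>N. (- z) * (\<Prod>i\<in>lat_box N. elem_factor ((- z) / \<omega> i))) \<longlonglongrightarrow> - \<sigma> z" by simp
  moreover have "(\<lambda>N. (- z) * (\<Prod>i\<in>lat_box N. elem_factor ((- z) / \<omega> i))) \<longlonglongrightarrow> \<sigma> (- z)" by (rule sigma_LIMSEQ)
  ultimately show ?thesis using LIMSEQ_unique by blast
qed

lemma wp_minus: "\<P> (- z) = \<P> z"
proof -
  have "(\<Sum>(m, n)\<in>lat_box N. (let w = lat_pt w1 w2 m n in 1 / (- z - w)\<^sup>2 - 1 / w\<^sup>2)) =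
        (\<Sum>(m, n)\<in>lat_box N. (let w = lat_pt w1 w2 m n in 1 / (z - w)\<^sup>2 - 1 / w\<^sup>2))" for N
  proof -
    have e: "(\<lambda>(m, n). let w = lat_pt w1 w2 m n in 1 / (u - w)\<^sup>2 - 1 / w\<^sup>2) = (\<lambda>i. 1 / (u - \<omega> i)\<^sup>2 - 1 / (\<omega> i)\<^sup>2)" for u
      by (auto simp: fun_eq_iff Let_def)
    have "(\<Sum>i\<in>lat_box N. 1 / (- z - \<omega> i)\<^sup>2 - 1 / (\<omega> i)\<^sup>2) = (\<Sum>i\<in>lat_box N. 1 / (- z - \<omega> (idx_neg i))\<^sup>2 - 1 / (\<omega> (idx_neg i))\<^sup>2)"
      by (rule sum.reindex_bij_betw[OF bij_idx_neg_lat_box, symmetric])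
    also have "\<dots> = (\<Sum>i\<in>lat_box N. 1 / (z - \<omega> i)\<^sup>2 - 1 / (\<omega> i)\<^sup>2)"
    proof (rule sum.cong[OF refl])
      fix i
      have "(- z - \<omega> (idx_neg i))\<^sup>2 = (z - \<omega> i)\<^sup>2" by (simp add: lat_pt_idx_neg power2_eq_square algebra_simps)
      thus "1 / (- z - \<omega> (idx_neg i))\<^sup>2 - 1 / (\<omega> (idx_neg i))\<^sup>2 = 1 / (z - \<omega> i)\<^sup>2 - 1 / (\<omega> i)\<^sup>2" by (simp add: lat_pt_idx_neg)
    qed
    finally show ?thesis unfolding e .
  qed
  thus ?thesis by (simp add: wp_def)
qed

lemma wp_deriv_periodic: "wp_deriv (z + \<omega> k) = wp_deriv z"
proof -
  have "infsum (\<lambda>i. 1 / (z + \<omega> k - \<omega> i) ^ 3) UNIV = infsum (\<lambda>i. 1 / (z + \<omega> k - \<omega> (idx_shift k i)) ^ 3) UNIV"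
    by (rule infsum_reindex_bij_betw[OF bij_idx_shift, symmetric])
  also have "\<dots> = infsum (\<lambda>i. 1 / (z - \<omega> i) ^ 3) UNIV" by (simp add: lat_pt_idx_shift)
  finally show ?thesis by (simp add: wp_deriv_def)
qed

lemma add_lat_pt_in_lattice_iff: "z + \<omega> k \<in> \<Lambda> \<longleftrightarrow> z \<in> \<Lambda>"
proof
  assume "z + \<omega> k \<in> \<Lambda>"
  then obtain i where "z + \<omega> k = \<omega> i" by (auto simp: \<Lambda>_def)
  moreover have "\<omega> (idx_shift (- fst k, - snd k) i) = \<omega> i - \<omega> k" by (simp add: idx_shift_def lat_pt_def algebra_simps)
  ultimately have "z = \<omega> (idx_shift (- fst k, - snd k) i)" by (metis add_diff_cancel)
  thus "z \<in> \<Lambda>" by (simp add: \<Lambda>_def)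
next
  assume "z \<in> \<Lambda>"
  then obtain i where "z = \<omega> i" by (auto simp: \<Lambda>_def)
  hence "z + \<omega> k = \<omega> (idx_shift k i)" by (simp add: lat_pt_idx_shift)
  thus "z + \<omega> k \<in> \<Lambda>" by (simp add: \<Lambda>_def)
qed

lemma lattice_dist_ge: "x \<in> \<Lambda> \<Longrightarrow> y \<in> \<Lambda> \<Longrightarrow> x \<noteq> y \<Longrightarrow> dist x y \<ge> lat_sep"
proof -
  assume "x \<in> \<Lambda>" "y \<in> \<Lambda>" "x \<noteq> y"
  then obtain i j where ij: "x = \<omega> i" "y = \<omega> j" by (auto simp: \<Lambda>_def)
  define k where "k = idx_shift (- fst j, - snd j) i"
  have "\<omega> k = \<omega> i - \<omega> j" by (simp add: k_def idx_shift_def lat_pt_def algebra_simps)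
  hence "\<omega> k = x - y" using ij by simp
  hence k0: "k \<noteq> (0,0)" using \<open>x \<noteq> y\<close> by (auto simp: lat_pt_def)
  have one: "(1::real) \<le> \<bar>real_of_int a\<bar>" if "a \<noteq> 0" for a :: int
  proof -
    have "1 \<le> \<bar>a\<bar>" using that by arith
    hence "real_of_int 1 \<le> real_of_int \<bar>a\<bar>" by (simp only: of_int_le_iff)
    thus ?thesis by simp
  qed
  have "fst k \<noteq> 0 \<or> snd k \<noteq> 0" using k0 by (cases k) auto
  hence "1 \<le> \<bar>real_of_int (fst k)\<bar> + \<bar>real_of_int (snd k)\<bar>"
    using one[of "fst k"] one[of "snd k"] by auto
  hence "lat_sep \<le> lat_sep * (\<bar>real_of_int (fst k)\<bar> + \<bar>real_of_int (snd k)\<bar>)"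
    using lat_sep_pos by (simp add: mult_le_cancel_left1)
  also have "\<dots> \<le> norm (\<omega> k)" by (rule lat_sep_le_norm)
  finally show "dist x y \<ge> lat_sep" using \<open>\<omega> k = x - y\<close> by (simp add: dist_norm)
qed

lemma closed_lattice: "closed \<Lambda>"
  by (rule discrete_imp_closed[OF lat_sep_pos]) (use lattice_dist_ge in \<open>force simp: dist_commute\<close>)

lemma countable_lattice: "countable \<Lambda>"
  unfolding \<Lambda>_def by simp

lemma open_lattice_compl: "open (UNIV - \<Lambda>)"
  using closed_lattice by (simp add: open_Diff)

lemma connected_lattice_compl: "connected (UNIV - \<Lambda>)"
  by (rule connected_open_diff_countable) (auto simp: countable_lattice)

lemma sigma_lattice: "z \<in> \<Lambda> \<Longrightarrow> \<sigma> z = 0"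
proof -
  assume "z \<in> \<Lambda>"
  then obtain i where i: "z = \<omega> i" by (auto simp: \<Lambda>_def)
  show "\<sigma> z = 0"
  proof (cases "i = (0,0)")
    case True thus ?thesis using i sigma_0 by (simp add: lat_pt_def)
  next
    case False
    define R where "R = norm z + 1"
    have R: "R > 0" unfolding R_def by (rule add_nonneg_pos) auto
    have zR: "norm z \<le> R" by (simp add: R_def)
    have iS: "i \<in> near_idx R" using False i by (simp add: near_idx_def nonzero_idx_def R_def)
    have "\<omega> i \<noteq> 0" using False lat_pt_eq_0_iff by blast
    hence "elem_factor (z / \<omega> i) = 0" using i by (simp add: elem_factor_def)
    hence "(\<Prod>j\<in>near_idx R. elem_factor (z / \<omega> j)) = 0" using iS finite_near_idx by (auto intro: prod_zero)
    thus ?thesis using sigma_near_far[OF R zR] by simp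
  qed
qed

lemma constant_on_lattice_compl:
  assumes "\<And>z. z \<notin> \<Lambda> \<Longrightarrow> (f has_field_derivative 0) (at z)"
  shows "\<exists>c. \<forall>z. z \<notin> \<Lambda> \<longrightarrow> f z = c"
proof -
  have "continuous_on (UNIV - \<Lambda>) f"
    by (intro continuous_at_imp_continuous_on ballI DERIV_isCont[OF assms]) auto
  then obtain c where "\<And>z. z \<in> UNIV - \<Lambda> \<Longrightarrow> f z = c"
    using DERIV_zero_connected_constant[OF connected_lattice_compl open_lattice_compl finite.emptyI] assms
    by blast
  thus ?thesis by blast
qed

lemma wp_shift_constant: "\<exists>c. \<forall>z. z \<notin> \<Lambda> \<longrightarrow> \<P> (z + \<omega> k) - \<P> z = c"
proof (rule constant_on_lattice_compl)
  fix z assume z: "z \<notin> \<Lambda>"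
  hence "(\<P> has_field_derivative wp_deriv (z + \<omega> k)) (at (z + \<omega> k))"
    using add_lat_pt_in_lattice_iff has_field_derivative_wp by blast
  hence "((\<lambda>z. \<P> (z + \<omega> k)) has_field_derivative wp_deriv z) (at z)"
    by (simp add: DERIV_shift wp_deriv_periodic)
  from DERIV_diff[OF this has_field_derivative_wp[OF z]]
  show "((\<lambda>z. \<P> (z + \<omega> k) - \<P> z) has_field_derivative 0) (at z)" by simp
qed

lemma half_period_notin_lattice:
  assumes "k = (1,0) \<or> k = (0,1)"
  shows "- (\<omega> k / 2) \<notin> \<Lambda>"
proof
  assume "- (\<omega> k / 2) \<in> \<Lambda>"
  then obtain i where i: "- (\<omega> k / 2) = \<omega> i" by (auto simp: \<Lambda>_def)
  have "\<omega> (2 * fst i + fst k, 2 * snd i + snd k) = 2 * \<omega> i + \<omega> k"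
    by (simp add: lat_pt_def algebra_simps)
  also have "\<dots> = 0"
  proof -
    have "\<omega> i = - (\<omega> k / 2)" using i by simp
    hence "2 * \<omega> i = - \<omega> k" by simp
    thus ?thesis by simp
  qed
  finally have "(2 * fst i + fst k, 2 * snd i + snd k) = (0, 0)" using lat_pt_eq_0_iff by blast
  thus False using assms by auto presburger+
qed

lemma wp_periodic_generator:
  assumes "k = (1,0) \<or> k = (0,1)" "z \<notin> \<Lambda>"
  shows "\<P> (z + \<omega> k) = \<P> z"
proof -
  obtain c where c: "\<And>z. z \<notin> \<Lambda> \<Longrightarrow> \<P> (z + \<omega> k) - \<P> z = c" using wp_shift_constant by blast
  have "c = \<P> (- (\<omega> k / 2) + \<omega> k) - \<P> (- (\<omega> k / 2))" using c[OF half_period_notin_lattice[OF assms(1)]] by simp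
  also have "- (\<omega> k / 2) + \<omega> k = \<omega> k / 2" by simp
  also have "\<P> (\<omega> k / 2) - \<P> (- (\<omega> k / 2)) = 0" by (simp add: wp_minus)
  finally show ?thesis using c[OF assms(2)] by simp
qed

lemma lat_pt_decompose: "\<omega> k = of_int (fst k) * \<omega> (1,0) + of_int (snd k) * \<omega> (0,1)"
  by (simp add: lat_pt_def algebra_simps)

lemma wp_periodic:
  assumes "z \<notin> \<Lambda>"
  shows "\<P> (z + \<omega> k) = \<P> z"
proof -
  have P1: "\<And>z. (z + \<omega> (1,0) \<notin> \<Lambda>) \<longleftrightarrow> (z \<notin> \<Lambda>)" and P2: "\<And>z. (z + \<omega> (0,1) \<notin> \<Lambda>) \<longleftrightarrow> (z \<notin> \<Lambda>)"
    using add_lat_pt_in_lattice_iff by blast+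
  have A: "(z + of_int (fst k) * \<omega> (1,0)) \<notin> \<Lambda> \<and> \<P> (z + of_int (fst k) * \<omega> (1,0)) = \<P> z"
    by (rule int_multiple_shift_invariant[where P = "\<lambda>z. z \<notin> \<Lambda>"]) (use wp_periodic_generator P1 assms in auto)
  have B: "(z + of_int (fst k) * \<omega> (1,0)) + of_int (snd k) * \<omega> (0,1) \<notin> \<Lambda> \<and>
     \<P> ((z + of_int (fst k) * \<omega> (1,0)) + of_int (snd k) * \<omega> (0,1)) = \<P> (z + of_int (fst k) * \<omega> (1,0))"
    by (rule int_multiple_shift_invariant[where P = "\<lambda>z. z \<notin> \<Lambda>"]) (use wp_periodic_generator P2 A in auto)
  show ?thesis using A B by (simp add: lat_pt_decompose[of k] add.assoc)
qed

lemma wzeta_shift_constant: "\<exists>c. \<forall>z. z \<notin> \<Lambda> \<longrightarrow> wzeta (z + \<omega> k) - wzeta z = c"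
proof (rule constant_on_lattice_compl)
  fix z assume z: "z \<notin> \<Lambda>"
  hence "(wzeta has_field_derivative - \<P> (z + \<omega> k)) (at (z + \<omega> k))"
    using add_lat_pt_in_lattice_iff has_field_derivative_wzeta by blast
  hence "((\<lambda>z. wzeta (z + \<omega> k)) has_field_derivative - \<P> z) (at z)"
    by (simp add: DERIV_shift wp_periodic[OF z])
  from DERIV_diff[OF this has_field_derivative_wzeta[OF z]]
  show "((\<lambda>z. wzeta (z + \<omega> k) - wzeta z) has_field_derivative 0) (at z)" by simp
qed

lemma sigma_quasi_periodic: "\<exists>C \<eta>. C \<noteq> 0 \<and> (\<forall>z. \<sigma> (z + \<omega> k) = C * exp (\<eta> * z) * \<sigma> z)"
proof -
  obtain \<eta> where eta: "\<And>z. z \<notin> \<Lambda> \<Longrightarrow> wzeta (z + \<omega> k) - wzeta z = \<eta>"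
    using wzeta_shift_constant by blast
  have "\<exists>C. \<forall>z. z \<notin> \<Lambda> \<longrightarrow> \<sigma> (z + \<omega> k) * exp (- (\<eta> * z)) / \<sigma> z = C"
  proof (rule constant_on_lattice_compl)
    fix z assume z: "z \<notin> \<Lambda>"
    hence "(\<sigma> has_field_derivative \<sigma> (z + \<omega> k) * wzeta (z + \<omega> k)) (at (z + \<omega> k))"
      using add_lat_pt_in_lattice_iff has_field_derivative_sigma by blast
    moreover have "wzeta (z + \<omega> k) = wzeta z + \<eta>" using eta[OF z] by (simp add: algebra_simps)
    ultimately have "((\<lambda>z. \<sigma> (z + \<omega> k)) has_field_derivative \<sigma> (z + \<omega> k) * (wzeta z + \<eta>)) (at z)"
      by (simp add: DERIV_shift)
    thus "((\<lambda>z. \<sigma> (z + \<omega> k) * exp (- (\<eta> * z)) / \<sigma> z) has_field_derivative 0) (at z)"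
      using has_field_derivative_sigma[OF z] sigma_nonzero[OF z]
      by (auto intro!: derivative_eq_intros simp: field_simps)
  qed
  then obtain C where C: "\<And>z. z \<notin> \<Lambda> \<Longrightarrow> \<sigma> (z + \<omega> k) * exp (- (\<eta> * z)) / \<sigma> z = C" by blast
  have rel: "\<sigma> (z + \<omega> k) = C * exp (\<eta> * z) * \<sigma> z" for z
  proof (cases "z \<in> \<Lambda>")
    case True
    hence "z + \<omega> k \<in> \<Lambda>" using add_lat_pt_in_lattice_iff by auto
    thus ?thesis using True sigma_lattice by simp
  next
    case False
    thus ?thesis using C[OF False] sigma_nonzero[OF False] by (auto simp: exp_minus field_simps)
  qed
  obtain z0 where "z0 \<notin> \<Lambda>" using half_period_notin_lattice[of "(1, 0)"] by auto
  hence "\<sigma> (z0 + \<omega> k) \<noteq> 0" using add_lat_pt_in_lattice_iff sigma_nonzero by auto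
  hence "C \<noteq> 0" using rel[of z0] by auto
  thus ?thesis using rel by blast
qed

section \<open>The addition formula\<close>

lemma has_field_derivative_sigma_0: "(\<sigma> has_field_derivative 1) (at 0)"
proof -
  define Pr where "Pr u = (\<Prod>i\<in>near_idx 1. elem_factor (u / \<omega> i))" for u
  have "(Pr has_field_derivative Pr 0 * (\<Sum>i\<in>near_idx 1. zeta_term i 0)) (at 0)"
    unfolding Pr_def[abs_def] by (rule has_field_derivative_near_product) (auto simp: near_idx_def lat_pt_nonzero)
  moreover have "(log_tail 1 has_field_derivative infsum (\<lambda>i. zeta_term i 0) (far_idx 1)) (at 0)"
    by (rule has_field_derivative_log_tail) auto
  moreover have "Pr 0 = 1" "log_tail 1 0 = 0" by (simp_all add: Pr_def log_tail_def log_term_def)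
  ultimately have "((\<lambda>u. u * Pr u * exp (log_tail 1 u)) has_field_derivative 1) (at 0)"
    by (auto intro!: derivative_eq_intros)
  thus ?thesis
  proof (rule has_field_derivative_transform_within_open[of _ _ _ "ball 0 1"])
    fix u :: complex assume "u \<in> ball 0 1"
    thus "u * Pr u * exp (log_tail 1 u) = \<sigma> u" unfolding Pr_def by (intro sigma_near_far[symmetric]) auto
  qed auto
qed

definition sigma_div :: "complex \<Rightarrow> complex" where "sigma_div u = (if u = 0 then 1 else \<sigma> u / u)"

lemma sigma_div_holomorphic: "sigma_div holomorphic_on UNIV"
proof -
  have "(\<lambda>z. if z = 0 then deriv \<sigma> 0 else (\<sigma> z - \<sigma> 0) / (z - 0)) holomorphic_on UNIV"
    by (rule pole_lemma[OF sigma_holomorphic]) simp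
  moreover have "deriv \<sigma> 0 = 1" by (rule DERIV_imp_deriv[OF has_field_derivative_sigma_0])
  hence "(\<lambda>z. if z = 0 then deriv \<sigma> 0 else (\<sigma> z - \<sigma> 0) / (z - 0)) = sigma_div"
    by (intro ext) (simp add: sigma_div_def sigma_0)
  ultimately show ?thesis by simp
qed

lemma sigma_div_0: "sigma_div 0 = 1" by (simp add: sigma_div_def)
lemma sigma_eq_sigma_div: "\<sigma> u = u * sigma_div u" by (cases "u = 0") (auto simp: sigma_div_def sigma_0)
lemma sigma_div_minus: "sigma_div (- u) = sigma_div u" by (cases "u = 0") (auto simp: sigma_div_def sigma_minus)

lemma holomorphic_on_sigma_compose: "f holomorphic_on S \<Longrightarrow> (\<lambda>u. \<sigma> (f u)) holomorphic_on S"
  using holomorphic_on_compose[of f S \<sigma>] holomorphic_on_subset[OF sigma_holomorphic] by (auto simp: o_def)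

lemma holomorphic_on_sigma_div_compose: "f holomorphic_on S \<Longrightarrow> (\<lambda>u. sigma_div (f u)) holomorphic_on S"
  using holomorphic_on_compose[of f S sigma_div] holomorphic_on_subset[OF sigma_div_holomorphic] by (auto simp: o_def)

(* u^2 (sigma_div u)^2 sigma(v)^2 times the singular part 1/u^2 + sigma(u+v) sigma(u-v)/(sigma(u)^2 sigma(v)^2)
   of the addition defect at 0: an even entire function vanishing at 0, hence divisible by u^2. *)
definition defect_num :: "complex \<Rightarrow> complex \<Rightarrow> complex" where
  "defect_num v u = (sigma_div u)\<^sup>2 * (\<sigma> v)\<^sup>2 + \<sigma> (u + v) * \<sigma> (u - v)"

definition addition_defect :: "complex \<Rightarrow> complex \<Rightarrow> complex" where
  "addition_defect v u = \<P> u - \<P> v + \<sigma> (u + v) * \<sigma> (u - v) / ((\<sigma> u)\<^sup>2 * (\<sigma> v)\<^sup>2)"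

lemma defect_num_holomorphic: "defect_num v holomorphic_on UNIV"
  unfolding defect_num_def[abs_def] by (intro holomorphic_intros holomorphic_on_sigma_compose holomorphic_on_sigma_div_compose)

lemma defect_num_minus: "defect_num v (- u) = defect_num v u"
proof -
  have "\<sigma> (- u + v) * \<sigma> (- u - v) = \<sigma> (u + v) * \<sigma> (u - v)"
    using sigma_minus[of "u - v"] sigma_minus[of "u + v"] by (simp add: algebra_simps)
  thus ?thesis by (simp add: defect_num_def sigma_div_minus)
qed

lemma defect_num_0: "defect_num v 0 = 0"
  by (simp add: defect_num_def sigma_div_0 sigma_minus power2_eq_square)

definition defect_num_div :: "complex \<Rightarrow> complex \<Rightarrow> complex" where
  "defect_num_div v = (\<lambda>z. if z = 0 then deriv (defect_num v) 0 else (defect_num v z - defect_num v 0) / (z - 0))"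
definition defect_num_div2 :: "complex \<Rightarrow> complex \<Rightarrow> complex" where
  "defect_num_div2 v = (\<lambda>z. if z = 0 then deriv (defect_num_div v) 0 else (defect_num_div v z - defect_num_div v 0) / (z - 0))"

lemma defect_num_div_holomorphic: "defect_num_div v holomorphic_on UNIV"
  unfolding defect_num_div_def by (rule pole_lemma[OF defect_num_holomorphic]) simp

lemma defect_num_div2_holomorphic: "defect_num_div2 v holomorphic_on UNIV"
  unfolding defect_num_div2_def by (rule pole_lemma[OF defect_num_div_holomorphic]) simp

lemma defect_num_div2_eq: "z \<noteq> 0 \<Longrightarrow> defect_num_div2 v z = defect_num v z / z\<^sup>2"
proof -
  assume z: "z \<noteq> 0"
  have "defect_num v field_differentiable (at 0)"
    using defect_num_holomorphic by (rule holomorphic_on_imp_differentiable_at) auto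
  hence "defect_num_div v 0 = 0"
    unfolding defect_num_div_def by (simp add: deriv_0_of_even defect_num_minus)
  thus ?thesis using z by (simp add: defect_num_div2_def defect_num_div_def defect_num_0 power2_eq_square)
qed

definition defect_reg :: "complex \<Rightarrow> complex \<Rightarrow> complex" where
  "defect_reg v u = wp_reg u - \<P> v + defect_num_div2 v u / ((sigma_div u)\<^sup>2 * (\<sigma> v)\<^sup>2)"

lemma isCont_of_holomorphic_UNIV: "f holomorphic_on UNIV \<Longrightarrow> isCont f z"
  by (meson UNIV_I continuous_on_eq_continuous_at holomorphic_on_imp_continuous_on open_UNIV)

lemma isCont_defect_reg:
  assumes v: "v \<notin> \<Lambda>"
  shows "isCont (defect_reg v) 0"
proof -
  have c1: "isCont wp_reg 0"
    by (rule DERIV_isCont[OF has_field_derivative_wp_reg]) (use lat_pt_nonzero in force)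
  have c2: "isCont (defect_num_div2 v) 0" by (rule isCont_of_holomorphic_UNIV[OF defect_num_div2_holomorphic])
  have c3: "isCont sigma_div 0" by (rule isCont_of_holomorphic_UNIV[OF sigma_div_holomorphic])
  have nz: "(sigma_div 0)\<^sup>2 * (\<sigma> v)\<^sup>2 \<noteq> 0" using sigma_nonzero[OF v] by (simp add: sigma_div_0)
  show ?thesis unfolding defect_reg_def[abs_def] using c1 c2 c3 nz by (intro continuous_intros) auto
qed

lemma addition_defect_eq_reg:
  assumes "u \<noteq> 0" "sigma_div u \<noteq> 0" "v \<notin> \<Lambda>"
  shows "addition_defect v u = defect_reg v u"
proof -
  have sv: "\<sigma> v \<noteq> 0" using sigma_nonzero[OF assms(3)] .
  have "addition_defect v u = 1 / u\<^sup>2 + wp_reg u - \<P> v + \<sigma> (u + v) * \<sigma> (u - v) / ((u * sigma_div u)\<^sup>2 * (\<sigma> v)\<^sup>2)"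
    by (simp add: addition_defect_def wp_eq_wp_reg sigma_eq_sigma_div[of u])
  also have "\<dots> = wp_reg u - \<P> v + defect_num v u / u\<^sup>2 / ((sigma_div u)\<^sup>2 * (\<sigma> v)\<^sup>2)"
    using assms sv by (simp add: defect_num_def field_simps)
  also have "\<dots> = defect_reg v u" by (simp add: defect_reg_def defect_num_div2_eq[OF assms(1)])
  finally show ?thesis .
qed

lemma addition_defect_tendsto_0:
  assumes v: "v \<notin> \<Lambda>"
  shows "(addition_defect v \<longlongrightarrow> defect_reg v 0) (at 0)"
proof -
  have t: "(defect_reg v \<longlongrightarrow> defect_reg v 0) (at 0)" using isCont_defect_reg[OF v] by (simp add: isCont_def)
  have "isCont sigma_div 0" by (rule isCont_of_holomorphic_UNIV[OF sigma_div_holomorphic])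
  hence "\<forall>\<^sub>F u in at 0. sigma_div u \<noteq> 0"
    using sigma_div_0 by (metis continuous_at_avoid eventually_at_topological zero_neq_one isCont_def tendsto_imp_eventually_ne)
  moreover have "\<forall>\<^sub>F u in at 0. u \<noteq> (0::complex)" by (simp add: eventually_at_filter)
  ultimately have "\<forall>\<^sub>F u in at 0. defect_reg v u = addition_defect v u"
    by eventually_elim (use addition_defect_eq_reg v in auto)
  thus ?thesis using Lim_transform_eventually[OF t] by blast
qed

lemma addition_defect_periodic:
  assumes u: "u \<notin> \<Lambda>" and v: "v \<notin> \<Lambda>"
  shows "addition_defect v (u + \<omega> k) = addition_defect v u"
proof -
  obtain C \<eta> where C: "C \<noteq> 0" and rel: "\<And>z. \<sigma> (z + \<omega> k) = C * exp (\<eta> * z) * \<sigma> z"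
    using sigma_quasi_periodic[of k] by blast
  have a: "\<sigma> (u + \<omega> k + v) = C * exp (\<eta> * (u + v)) * \<sigma> (u + v)"
    using rel[of "u + v"] by (simp add: algebra_simps)
  have b: "\<sigma> (u + \<omega> k - v) = C * exp (\<eta> * (u - v)) * \<sigma> (u - v)"
    using rel[of "u - v"] by (simp add: algebra_simps)
  have c: "\<sigma> (u + \<omega> k) = C * exp (\<eta> * u) * \<sigma> u" by (rule rel)
  have e: "exp (\<eta> * (u + v)) * exp (\<eta> * (u - v)) = (exp (\<eta> * u))\<^sup>2"
    by (simp add: exp_add[symmetric] power2_eq_square algebra_simps)
  have su: "\<sigma> u \<noteq> 0" using sigma_nonzero[OF u] .
  have "\<sigma> (u + \<omega> k + v) * \<sigma> (u + \<omega> k - v) / ((\<sigma> (u + \<omega> k))\<^sup>2 * (\<sigma> v)\<^sup>2) =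
        (C * C * (exp (\<eta> * (u + v)) * exp (\<eta> * (u - v)))) * (\<sigma> (u + v) * \<sigma> (u - v)) /
        ((C * C * (exp (\<eta> * u))\<^sup>2) * ((\<sigma> u)\<^sup>2 * (\<sigma> v)\<^sup>2))"
    unfolding a b c by (simp add: power2_eq_square mult_ac)
  also have "\<dots> = \<sigma> (u + v) * \<sigma> (u - v) / ((\<sigma> u)\<^sup>2 * (\<sigma> v)\<^sup>2)"
    unfolding e using C by simp
  finally show ?thesis by (simp add: addition_defect_def wp_periodic[OF u])
qed

lemma eventually_notin_lattice: "\<forall>\<^sub>F u in at a. u \<notin> \<Lambda>"
proof (cases "a \<in> \<Lambda>")
  case True
  have "\<forall>x. x \<noteq> a \<and> dist x a < lat_sep \<longrightarrow> x \<notin> \<Lambda>"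
    using lattice_dist_ge[OF _ True] by (auto simp: dist_commute) (meson not_le)
  thus ?thesis unfolding eventually_at using lat_sep_pos by blast
next
  case False
  hence "\<forall>\<^sub>F u in at a. u \<in> UNIV - \<Lambda>" using open_lattice_compl by (intro eventually_at_in_open') auto
  thus ?thesis by simp
qed

lemma addition_defect_tendsto_lat_pt:
  assumes v: "v \<notin> \<Lambda>"
  shows "(addition_defect v \<longlongrightarrow> defect_reg v 0) (at (\<omega> k))"
proof -
  have "((\<lambda>x. addition_defect v (x + - \<omega> k)) \<longlongrightarrow> defect_reg v 0) (at (0 - - \<omega> k))"
    by (rule LIM_offset[OF addition_defect_tendsto_0[OF v]])
  hence t: "((\<lambda>x. addition_defect v (x + - \<omega> k)) \<longlongrightarrow> defect_reg v 0) (at (\<omega> k))" by simp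
  have "\<forall>\<^sub>F x in at (\<omega> k). addition_defect v (x + - \<omega> k) = addition_defect v x"
    using eventually_notin_lattice
  proof eventually_elim
    case (elim x)
    have x': "x + - \<omega> k \<notin> \<Lambda>"
    proof
      assume "x + - \<omega> k \<in> \<Lambda>"
      hence "(x + - \<omega> k) + \<omega> k \<in> \<Lambda>" using add_lat_pt_in_lattice_iff by blast
      thus False using elim by simp
    qed
    show ?case using addition_defect_periodic[OF x' v, of k] by simp
  qed
  thus ?thesis using Lim_transform_eventually[OF t] by blast
qed

definition defect_ext :: "complex \<Rightarrow> complex \<Rightarrow> complex" where
  "defect_ext v u = (if u \<in> \<Lambda> then defect_reg v 0 else addition_defect v u)"

lemma addition_defect_holomorphic:
  assumes v: "v \<notin> \<Lambda>"
  shows "addition_defect v holomorphic_on (UNIV - \<Lambda>)"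
proof -
  have "\<P> holomorphic_on (UNIV - \<Lambda>)"
    using has_field_derivative_wp open_lattice_compl by (auto simp: holomorphic_on_open)
  moreover have "\<And>u. u \<in> UNIV - \<Lambda> \<Longrightarrow> (\<sigma> u)\<^sup>2 * (\<sigma> v)\<^sup>2 \<noteq> 0" using sigma_nonzero v by auto
  ultimately show ?thesis unfolding addition_defect_def[abs_def]
    by (intro holomorphic_intros holomorphic_on_sigma_compose holomorphic_on_subset[OF sigma_holomorphic]) auto
qed

lemma defect_ext_tendsto:
  assumes v: "v \<notin> \<Lambda>"
  shows "(defect_ext v \<longlongrightarrow> defect_ext v a) (at a)"
proof (cases "a \<in> \<Lambda>")
  case True
  then obtain k where k: "a = \<omega> k" by (auto simp: \<Lambda>_def)
  have "\<forall>\<^sub>F u in at a. addition_defect v u = defect_ext v u"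
    using eventually_notin_lattice by eventually_elim (simp add: defect_ext_def)
  moreover have "(addition_defect v \<longlongrightarrow> defect_ext v a) (at a)"
    using addition_defect_tendsto_lat_pt[OF v, of k] True k by (simp add: defect_ext_def)
  ultimately show ?thesis using Lim_transform_eventually by blast
next
  case False
  have "isCont (addition_defect v) a"
    using addition_defect_holomorphic[OF v] open_lattice_compl False
    by (meson DiffI UNIV_I continuous_on_eq_continuous_at holomorphic_on_imp_continuous_on)
  hence t: "(addition_defect v \<longlongrightarrow> defect_ext v a) (at a)" using False by (simp add: defect_ext_def isCont_def)
  have "\<forall>\<^sub>F u in at a. addition_defect v u = defect_ext v u"
    using eventually_notin_lattice by eventually_elim (simp add: defect_ext_def)
  thus ?thesis using Lim_transform_eventually[OF t] by blast
qed

lemma finite_lattice_ball: "finite (\<Lambda> \<inter> ball a (lat_sep / 2))"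
proof (cases "\<Lambda> \<inter> ball a (lat_sep / 2) = {}")
  case False
  then obtain x where x: "x \<in> \<Lambda> \<inter> ball a (lat_sep / 2)" by blast
  have "\<Lambda> \<inter> ball a (lat_sep / 2) \<subseteq> {x}"
  proof
    fix y assume y: "y \<in> \<Lambda> \<inter> ball a (lat_sep / 2)"
    have "dist y x \<le> dist y a + dist a x" by (rule dist_triangle)
    moreover have "dist y a < lat_sep / 2" "dist a x < lat_sep / 2" using x y by (auto simp: dist_commute)
    ultimately have "dist y x < lat_sep" by linarith
    thus "y \<in> {x}" using lattice_dist_ge[of y x] x y by (auto simp: not_le[symmetric])
  qed
  thus ?thesis using finite_subset by blast
qed simp

lemma defect_ext_holomorphic:
  assumes v: "v \<notin> \<Lambda>"
  shows "defect_ext v holomorphic_on UNIV"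
proof -
  have "defect_ext v field_differentiable (at a)" for a
  proof -
    have "defect_ext v holomorphic_on ball a (lat_sep / 2)"
    proof (rule no_isolated_singularity'[where K = "\<Lambda> \<inter> ball a (lat_sep / 2)"])
      fix z assume "z \<in> \<Lambda> \<inter> ball a (lat_sep / 2)"
      show "(defect_ext v \<longlongrightarrow> defect_ext v z) (at z within ball a (lat_sep / 2))"
        using defect_ext_tendsto[OF v, of z] by (rule tendsto_within_subset) simp
    next
      have "addition_defect v holomorphic_on (ball a (lat_sep / 2) - \<Lambda> \<inter> ball a (lat_sep / 2))"
        by (rule holomorphic_on_subset[OF addition_defect_holomorphic[OF v]]) auto
      thus "defect_ext v holomorphic_on (ball a (lat_sep / 2) - \<Lambda> \<inter> ball a (lat_sep / 2))"
        by (rule holomorphic_transform) (auto simp: defect_ext_def)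
    qed (auto simp: finite_lattice_ball)
    thus ?thesis using lat_sep_pos by (intro holomorphic_on_imp_differentiable_at[of _ "ball a (lat_sep/2)"]) auto
  qed
  thus ?thesis by (simp add: holomorphic_on_def field_differentiable_at_within)
qed

lemma fundamental_domain_rep: "\<exists>k s t. s \<in> {0..1} \<and> t \<in> {0..1} \<and> z = \<omega> k + (of_real s * w1 + of_real t * w2)"
proof -
  define \<tau> where "\<tau> = w2 / w1"
  have it: "Im \<tau> \<noteq> 0" using periods by (simp add: \<tau>_def)
  define t0 where "t0 = Im (z / w1) / Im \<tau>"
  define s0 where "s0 = Re (z / w1) - t0 * Re \<tau>"
  have "of_real s0 + of_real t0 * \<tau> = z / w1"
    by (rule complex_eqI) (use it in \<open>simp_all add: s0_def t0_def\<close>)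
  hence zz: "z = of_real s0 * w1 + of_real t0 * w2"
    using w1_nz by (simp add: \<tau>_def field_simps)
  define k where "k = (\<lfloor>s0\<rfloor>, \<lfloor>t0\<rfloor>)"
  have "z = \<omega> k + (of_real (s0 - of_int \<lfloor>s0\<rfloor>) * w1 + of_real (t0 - of_int \<lfloor>t0\<rfloor>) * w2)"
    unfolding zz k_def by (simp add: lat_pt_def algebra_simps)
  moreover have "s0 - of_int \<lfloor>s0\<rfloor> \<in> {0..1}" "t0 - of_int \<lfloor>t0\<rfloor> \<in> {0..1}"
    by (auto simp: floor_le_iff) linarith+
  ultimately show ?thesis by blast
qed

lemma defect_ext_periodic:
  assumes v: "v \<notin> \<Lambda>"
  shows "defect_ext v (z + \<omega> k) = defect_ext v z"
proof (cases "z \<in> \<Lambda>")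
  case True thus ?thesis using add_lat_pt_in_lattice_iff by (simp add: defect_ext_def)
next
  case False thus ?thesis using add_lat_pt_in_lattice_iff addition_defect_periodic[OF False v] by (simp add: defect_ext_def)
qed

lemma defect_ext_bounded:
  assumes v: "v \<notin> \<Lambda>"
  shows "bounded (range (defect_ext v))"
proof -
  define K where "K = (\<lambda>p. of_real (fst p) * w1 + of_real (snd p) * w2) ` ({0..1::real} \<times> {0..1::real})"
  have cK: "compact K" unfolding K_def
    by (intro compact_continuous_image compact_Times compact_Icc continuous_intros)
  have cP: "continuous_on K (defect_ext v)"
    using defect_ext_tendsto[OF v] by (intro continuous_at_imp_continuous_on) (auto simp: isCont_def)
  have "range (defect_ext v) \<subseteq> defect_ext v ` K"
  proof
    fix y assume "y \<in> range (defect_ext v)"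
    then obtain z where y: "y = defect_ext v z" by blast
    obtain k s t where st: "s \<in> {0..1}" "t \<in> {0..1}" and z: "z = \<omega> k + (of_real s * w1 + of_real t * w2)"
      using fundamental_domain_rep by blast
    have "of_real s * w1 + of_real t * w2 \<in> K" using st unfolding K_def by force
    moreover have "y = defect_ext v (of_real s * w1 + of_real t * w2)"
      using defect_ext_periodic[OF v, of "of_real s * w1 + of_real t * w2" k] y z by (simp add: add.commute)
    ultimately show "y \<in> defect_ext v ` K" by blast
  qed
  moreover have "bounded (defect_ext v ` K)"
    by (intro compact_imp_bounded compact_continuous_image cP cK)
  ultimately show ?thesis using bounded_subset by blast
qed

theorem wp_diff_sigma:
  assumes u: "u \<notin> \<Lambda>" and v: "v \<notin> \<Lambda>"
  shows "\<P> u - \<P> v = - (\<sigma> (u + v) * \<sigma> (u - v) / ((\<sigma> u)\<^sup>2 * (\<sigma> v)\<^sup>2))"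
proof -
  have "defect_ext v constant_on UNIV" by (rule Liouville_theorem[OF defect_ext_holomorphic[OF v] defect_ext_bounded[OF v]])
  hence "defect_ext v u = defect_ext v v" unfolding constant_on_def by auto
  hence "addition_defect v u = addition_defect v v" using u v by (simp add: defect_ext_def)
  also have "addition_defect v v = 0" by (simp add: addition_defect_def sigma_0)
  finally show ?thesis by (simp add: addition_defect_def eq_neg_iff_add_eq_0)
qed

section \<open>Rank one structure of the Lax matrices\<close>

definition bracket :: "complex \<Rightarrow> complex \<Rightarrow> complex" where
  "bracket u v = \<sigma> (u + v) * \<sigma> (u - v)"

definition wcol :: "complex \<Rightarrow> complex^2" where
  "wcol p = vector [(\<sigma> p)\<^sup>2 * \<P> p, (\<sigma> p)\<^sup>2]"

definition wrow :: "complex \<Rightarrow> complex^2" where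
  "wrow q = vector [- (\<sigma> q)\<^sup>2, (\<sigma> q)\<^sup>2 * \<P> q]"

lemma bracket_eq_wp:
  assumes "u \<notin> \<Lambda>" "v \<notin> \<Lambda>"
  shows "bracket u v = (\<P> v - \<P> u) * (\<sigma> u)\<^sup>2 * (\<sigma> v)\<^sup>2"
  using wp_diff_sigma[OF assms] sigma_nonzero[OF assms(1)] sigma_nonzero[OF assms(2)]
  by (simp add: bracket_def field_simps)

lemma bracket_self [simp]: "bracket u u = 0"
  by (simp add: bracket_def sigma_0)

lemma bracket_eqI: "u + v = a \<Longrightarrow> u - v = b \<Longrightarrow> bracket u v = \<sigma> a * \<sigma> b"
  by (simp add: bracket_def)

lemma bracket_eq_negI:
  assumes "u + v = a" "v - u = b"
  shows "bracket u v = - (\<sigma> a * \<sigma> b)"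
proof -
  have "u - v = - b" using assms(2) by (metis minus_diff_eq)
  thus ?thesis using assms(1) by (simp add: bracket_def sigma_minus)
qed



lemma bracket_three_term:
  assumes "a \<notin> \<Lambda>" "b \<notin> \<Lambda>" "c \<notin> \<Lambda>" "d \<notin> \<Lambda>"
  shows "bracket a b * bracket c d + bracket a c * bracket d b + bracket a d * bracket b c = 0"
  by (simp add: bracket_eq_wp assms algebra_simps power2_eq_square)

lemma pairing_wrow_wcol:
  "p \<notin> \<Lambda> \<Longrightarrow> q \<notin> \<Lambda> \<Longrightarrow> pairing (wrow q) (wcol p) = bracket p q"
  by (simp add: pairing_def wrow_def wcol_def bracket_eq_wp algebra_simps)

lemma det2_wrow: "p \<notin> \<Lambda> \<Longrightarrow> q \<notin> \<Lambda> \<Longrightarrow> det2 (wrow p) (wrow q) = - bracket p q"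
  by (simp add: det2_def wrow_def bracket_eq_wp algebra_simps)

lemma det2_wcol: "p \<notin> \<Lambda> \<Longrightarrow> q \<notin> \<Lambda> \<Longrightarrow> det2 (wcol p) (wcol q) = - bracket p q"
  by (simp add: det2_def wcol_def bracket_eq_wp algebra_simps)

lemma wM_mult_wcol:
  assumes "p \<notin> \<Lambda>" "x - l \<notin> \<Lambda>"
  shows "wM w1 w2 x b l *v wcol p = (bracket p (x - l) / (\<sigma> (2 * x) * \<sigma> (2 * l))) *s wcol (x + l - b)"
  unfolding wM_def msc_mult_vector wcol_def mat2_mult_vector
  by (simp add: bracket_eq_wp assms vec_eq_iff forall_2 algebra_simps)

lemma wM_neg_mult_wcol:
  assumes "p \<notin> \<Lambda>" "x + l \<notin> \<Lambda>"
  shows "wM w1 w2 x (- b) (- l) *v wcol p = (- bracket p (x + l) / (\<sigma> (2 * x) * \<sigma> (2 * l))) *s wcol (x - l + b)"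
  using wM_mult_wcol[of p x "- l" "- b"] assms by (simp add: sigma_minus)

lemma wL_mult_wcol:
  assumes "p \<notin> \<Lambda>" "x - l \<notin> \<Lambda>" "x + l \<notin> \<Lambda>"
  shows "wL w1 w2 q x b l *v wcol p =
    (exp q * bracket p (x - l) / (\<sigma> (2 * x) * \<sigma> (2 * l))) *s wcol (x + l - b) -
    (exp (- q) * bracket p (x + l) / (\<sigma> (2 * x) * \<sigma> (2 * l))) *s wcol (x - l + b)"
  unfolding wL_def matrix_vector_mult_add_rdistrib msc_mult_vector
  by (simp add: wM_mult_wcol[OF assms(1,2)] wM_neg_mult_wcol[OF assms(1,3)] vector_smult_assoc)

lemma wL_mult_wcol_plus:
  assumes "x + l \<notin> \<Lambda>" "x - l \<notin> \<Lambda>" "\<sigma> (2 * x) \<noteq> 0" "\<sigma> (2 * l) \<noteq> 0"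
  shows "wL w1 w2 q x b l *v wcol (x + l) = exp q *s wcol (x + l - b)"
proof -
  have "bracket (x + l) (x - l) = \<sigma> (2 * x) * \<sigma> (2 * l)"
    by (rule bracket_eqI) (simp_all add: algebra_simps)
  thus ?thesis using assms by (simp add: wL_mult_wcol)
qed

lemma wL_mult_wcol_minus:
  assumes "x + l \<notin> \<Lambda>" "x - l \<notin> \<Lambda>" "\<sigma> (2 * x) \<noteq> 0" "\<sigma> (2 * l) \<noteq> 0"
  shows "wL w1 w2 q x b l *v wcol (x - l) = exp (- q) *s wcol (x - l + b)"
proof -
  have "bracket (x - l) (x + l) = - (\<sigma> (2 * x) * \<sigma> (2 * l))"
    by (rule bracket_eq_negI) (simp_all add: algebra_simps)
  thus ?thesis using assms by (simp add: wL_mult_wcol)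
qed

lemma pairing_wL_plus:
  assumes "p \<notin> \<Lambda>" "x + l \<notin> \<Lambda>" "x - l \<notin> \<Lambda>" "x + l - b \<notin> \<Lambda>" "x - l + b \<notin> \<Lambda>"
    and "\<sigma> (2 * x) \<noteq> 0"
  shows "pairing (wrow (x + l - b)) (wL w1 w2 q x b l *v wcol p) =
    exp (- q) * bracket p (x + l) * \<sigma> (2 * l - 2 * b) / \<sigma> (2 * l)"
proof -
  have "bracket (x - l + b) (x + l - b) = - (\<sigma> (2 * x) * \<sigma> (2 * l - 2 * b))"
    by (rule bracket_eq_negI) (simp_all add: algebra_simps)
  thus ?thesis using assms by (simp add: wL_mult_wcol pairing_wrow_wcol)
qed

lemma pairing_wL_minus:
  assumes "p \<notin> \<Lambda>" "x + l \<notin> \<Lambda>" "x - l \<notin> \<Lambda>" "x + l - b \<notin> \<Lambda>" "x - l + b \<notin> \<Lambda>"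
    and "\<sigma> (2 * x) \<noteq> 0"
  shows "pairing (wrow (x - l + b)) (wL w1 w2 q x b l *v wcol p) =
    exp q * bracket p (x - l) * \<sigma> (2 * l - 2 * b) / \<sigma> (2 * l)"
proof -
  have "bracket (x + l - b) (x - l + b) = \<sigma> (2 * x) * \<sigma> (2 * l - 2 * b)"
    by (rule bracket_eqI) (simp_all add: algebra_simps)
  thus ?thesis using assms by (simp add: wL_mult_wcol pairing_wrow_wcol)
qed

lemma pairing_wL:
  assumes "p \<notin> \<Lambda>" "r \<notin> \<Lambda>" "x + l \<notin> \<Lambda>" "x - l \<notin> \<Lambda>" "x + l - b \<notin> \<Lambda>" "x - l + b \<notin> \<Lambda>"
  shows "pairing (wrow r) (wL w1 w2 q x b l *v wcol p) =
    (exp q * bracket p (x - l) * bracket (x + l - b) r -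
     exp (- q) * bracket p (x + l) * bracket (x - l + b) r) / (\<sigma> (2 * x) * \<sigma> (2 * l))"
  using assms by (simp add: wL_mult_wcol pairing_wrow_wcol diff_divide_distrib)

lemma wV_eq_wL: "wV w1 w2 e G x l = wL w1 w2 (e * G) x e l"
  by (simp add: wV_def wL_def)

lemma sigma_eq_negI: "a + b = 0 \<Longrightarrow> \<sigma> a = - \<sigma> b"
  by (simp add: eq_neg_iff_add_eq_0 [symmetric] sigma_minus)

lemma wF_swap: "wF w1 w2 y x a = \<sigma> (x + y + a) * \<sigma> (x - y - a) / (\<sigma> (x + y - a) * \<sigma> (x - y + a))"
proof -
  have "\<sigma> (y - x + a) = - \<sigma> (x - y - a)" "\<sigma> (y - x - a) = - \<sigma> (x - y + a)"
    by (rule sigma_eq_negI, simp)+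
  thus ?thesis by (simp add: wF_def add.commute)
qed

lemma wF_ok_nonzero:
  assumes "wF_ok w1 w2 x y a"
  shows "\<sigma> (x + y + a) \<noteq> 0" "\<sigma> (x - y + a) \<noteq> 0" "\<sigma> (x + y - a) \<noteq> 0" "\<sigma> (x - y - a) \<noteq> 0"
  using assms by (simp_all add: wF_ok_def)

lemma eventually_cosparse_affine_notin_lattice:
  assumes "\<alpha> \<noteq> 0"
  shows "\<forall>\<^sub>F l in cosparse UNIV. \<alpha> * l + c \<notin> \<Lambda>"
proof -
  have "uniform_discrete {l. \<alpha> * l + c \<in> \<Lambda>}"
    unfolding uniform_discrete_def
  proof (intro exI[of _ "lat_sep / norm \<alpha>"] conjI ballI impI)
    show "lat_sep / norm \<alpha> > 0" using lat_sep_pos assms by simp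
    fix l1 l2 assume l: "l1 \<in> {l. \<alpha> * l + c \<in> \<Lambda>}" "l2 \<in> {l. \<alpha> * l + c \<in> \<Lambda>}"
      and "dist l1 l2 < lat_sep / norm \<alpha>"
    hence "norm \<alpha> * dist l1 l2 < lat_sep" using assms by (simp add: field_simps)
    moreover have "dist (\<alpha> * l1 + c) (\<alpha> * l2 + c) = norm \<alpha> * dist l1 l2"
      by (simp add: dist_norm norm_mult flip: right_diff_distrib)
    ultimately have "\<alpha> * l1 + c = \<alpha> * l2 + c" using lattice_dist_ge l by force
    thus "l1 = l2" using assms by simp
  qed
  thus ?thesis unfolding eventually_cosparse by (simp add: uniform_discrete_imp_sparse)
qed

lemma eventually_cosparse_shift_notin_lattice: "\<forall>\<^sub>F l in cosparse UNIV. a + l \<notin> \<Lambda> \<and> a - l \<notin> \<Lambda>"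
  using eventually_conj[OF eventually_cosparse_affine_notin_lattice[of 1 a]
      eventually_cosparse_affine_notin_lattice[of "- 1" a]]
  by (simp add: add.commute)

end

section \<open>One cell of the triangular lattice\<close>

(* x, y, z stand for x_k^n, x_k^(n+1), x_(k+1)^n, and px, py, Gx, Gz for p_k^n, p_k^(n+1), G_k^n,
   G_(k+1)^n; the last three assumptions are the definitions of p and G and the Toda equation at (k,n),
   in the form in which they are used. *)
locale toda_cell = period_lattice +
  fixes \<epsilon> \<beta> x y z px py Gx Gz :: complex
  assumes F_ok: "wF_ok w1 w2 x y \<epsilon>" "wF_ok w1 w2 y z (\<beta> - \<epsilon>)" "wF_ok w1 w2 x z \<beta>"
    and sigma_double_nonzero: "\<sigma> (2 * x) \<noteq> 0" "\<sigma> (2 * y) \<noteq> 0" "\<sigma> (2 * z) \<noteq> 0"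
    and exp_py: "exp (2 * py) = wF w1 w2 y x \<epsilon> * wF w1 w2 y z (\<beta> - \<epsilon>)"
    and exp_Gz: "exp (2 * \<epsilon> * Gz) = wF w1 w2 z x \<beta> / wF w1 w2 z y (\<beta> - \<epsilon>)"
    and exp_px_Gx: "exp (2 * px) * wF w1 w2 x y \<epsilon> = exp (2 * \<epsilon> * Gx) * wF w1 w2 x z \<beta>"
begin

definition "A1 = \<sigma> (x + y + \<epsilon>)"
definition "A2 = \<sigma> (x - y + \<epsilon>)"
definition "A3 = \<sigma> (x + y - \<epsilon>)"
definition "A4 = \<sigma> (x - y - \<epsilon>)"
definition "B1 = \<sigma> (y + z + (\<beta> - \<epsilon>))"
definition "B2 = \<sigma> (y - z + (\<beta> - \<epsilon>))"
definition "B3 = \<sigma> (y + z - (\<beta> - \<epsilon>))"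
definition "B4 = \<sigma> (y - z - (\<beta> - \<epsilon>))"
definition "D1 = \<sigma> (x + z + \<beta>)"
definition "D2 = \<sigma> (x - z + \<beta>)"
definition "D3 = \<sigma> (x + z - \<beta>)"
definition "D4 = \<sigma> (x - z - \<beta>)"

lemma atoms_nonzero:
  "A1 \<noteq> 0" "A2 \<noteq> 0" "A3 \<noteq> 0" "A4 \<noteq> 0" "B1 \<noteq> 0" "B2 \<noteq> 0" "B3 \<noteq> 0" "B4 \<noteq> 0"
  "D1 \<noteq> 0" "D2 \<noteq> 0" "D3 \<noteq> 0" "D4 \<noteq> 0"
  unfolding A1_def A2_def A3_def A4_def B1_def B2_def B3_def B4_def D1_def D2_def D3_def D4_def
  using wF_ok_nonzero[OF F_ok(1)] wF_ok_nonzero[OF F_ok(2)] wF_ok_nonzero[OF F_ok(3)] by simp_all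

lemma wF_atoms:
  "wF w1 w2 x y \<epsilon> = A1 * A2 / (A3 * A4)" "wF w1 w2 y z (\<beta> - \<epsilon>) = B1 * B2 / (B3 * B4)"
  "wF w1 w2 x z \<beta> = D1 * D2 / (D3 * D4)"
  unfolding A1_def A2_def A3_def A4_def B1_def B2_def B3_def B4_def D1_def D2_def D3_def D4_def
  by (simp_all only: wF_def)

lemma wF_atoms_swapped:
  "wF w1 w2 y x \<epsilon> = A1 * A4 / (A3 * A2)" "wF w1 w2 z y (\<beta> - \<epsilon>) = B1 * B4 / (B3 * B2)"
  "wF w1 w2 z x \<beta> = D1 * D4 / (D3 * D2)"
  unfolding A1_def A2_def A3_def A4_def B1_def B2_def B3_def B4_def D1_def D2_def D3_def D4_def
  by (simp_all only: wF_swap)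

lemma exp_py_sq: "(exp py)\<^sup>2 * (A2 * A3 * B3 * B4) = A1 * A4 * B1 * B2"
  using exp_py[unfolded exp_double] atoms_nonzero by (simp add: wF_atoms wF_atoms_swapped field_simps)

lemma exp_Gz_sq: "(exp (\<epsilon> * Gz))\<^sup>2 * (B1 * B4 * D2 * D3) = B2 * B3 * D1 * D4"
  using exp_Gz[unfolded mult.assoc exp_double] atoms_nonzero by (simp add: wF_atoms_swapped field_simps)

lemma exp_px_Gx_sq: "(exp px)\<^sup>2 * (A1 * A2 * D3 * D4) = (exp (\<epsilon> * Gx))\<^sup>2 * (A3 * A4 * D1 * D2)"
  using exp_px_Gx[unfolded mult.assoc exp_double] atoms_nonzero by (simp add: wF_atoms field_simps)

definition lax_factor :: complex where
  "lax_factor = exp (\<epsilon> * Gx) * exp (\<epsilon> * Gz) * A4 * B1 * D2 / (exp py * exp px * A2 * B3 * D4)"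

lemma lax_factor_nonzero: "lax_factor \<noteq> 0"
  using atoms_nonzero by (simp add: lax_factor_def)

lemma exp_py_eq: "exp py = exp (- py) * (A1 * A4 * B1 * B2) / (A2 * A3 * B3 * B4)"
  using exp_py_sq atoms_nonzero by (simp add: exp_minus field_simps power2_eq_square)

lemma exp_Gz_eq: "exp (\<epsilon> * Gz) = exp (- (\<epsilon> * Gz)) * (B2 * B3 * D1 * D4) / (B1 * B4 * D2 * D3)"
  using exp_Gz_sq atoms_nonzero by (simp add: exp_minus field_simps power2_eq_square)

lemma exp_Gx_eq:
  "exp (- (\<epsilon> * Gx)) = exp (\<epsilon> * Gx) * (exp (- px))\<^sup>2 * (A3 * A4 * D1 * D2) / (A1 * A2 * D3 * D4)"
  using exp_px_Gx_sq atoms_nonzero by (simp add: exp_minus field_simps power2_eq_square)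

definition centres :: "complex set" where
  "centres = {x, y, z, x - \<epsilon>, x + \<epsilon>, x - \<beta>, x + \<beta>, y - \<epsilon>, y + \<epsilon>, y - \<beta>, y + \<beta>,
              z - \<epsilon>, z + \<epsilon>, z - \<beta>, z + \<beta>}"

end

locale toda_cell_at = toda_cell +
  fixes l :: complex
  assumes centres_off_lattice: "\<forall>a\<in>centres. a + l \<notin> \<Lambda> \<and> a - l \<notin> \<Lambda>"
    and doubles_off_lattice: "2 * l \<notin> \<Lambda>" "2 * l - 2 * \<epsilon> \<notin> \<Lambda>"
begin

abbreviation "Lx \<equiv> wL w1 w2 px x \<beta> l"
abbreviation "Ly \<equiv> wL w1 w2 py y \<beta> l"
abbreviation "Vx \<equiv> wL w1 w2 (\<epsilon> * Gx) x \<epsilon> l"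
abbreviation "Vz \<equiv> wL w1 w2 (\<epsilon> * Gz) z \<epsilon> l"

definition "U1 = \<sigma> (x - y + 2 * l - \<epsilon>)"
definition "U2 = \<sigma> (x + y + 2 * l - \<epsilon>)"
definition "U3 = \<sigma> (x + y - 2 * l + \<epsilon>)"
definition "U4 = \<sigma> (x - y - 2 * l + \<epsilon>)"
definition "V1 = \<sigma> (y + z + 2 * l - \<beta> - \<epsilon>)"
definition "V2 = \<sigma> (y - z - 2 * l + \<beta> + \<epsilon>)"
definition "V3 = \<sigma> (y - z + 2 * l - \<beta> - \<epsilon>)"
definition "V4 = \<sigma> (y + z - 2 * l + \<beta> + \<epsilon>)"
definition "W1 = \<sigma> (x + z + 2 * l - \<beta>)"
definition "W2 = \<sigma> (x - z + 2 * l - \<beta>)"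
definition "W3 = \<sigma> (x + z - 2 * l + \<beta>)"
definition "W4 = \<sigma> (x - z - 2 * l + \<beta>)"

lemmas atom_defs = A1_def A2_def A3_def A4_def B1_def B2_def B3_def B4_def D1_def D2_def D3_def D4_def
  U1_def U2_def U3_def U4_def V1_def V2_def V3_def V4_def W1_def W2_def W3_def W4_def

lemma off_lattice:
  "x + l \<notin> \<Lambda>" "x - l \<notin> \<Lambda>" "y + l \<notin> \<Lambda>" "y - l \<notin> \<Lambda>" "z + l \<notin> \<Lambda>" "z - l \<notin> \<Lambda>"
  "x + l - \<epsilon> \<notin> \<Lambda>" "x - l + \<epsilon> \<notin> \<Lambda>" "x + l - \<beta> \<notin> \<Lambda>" "x - l + \<beta> \<notin> \<Lambda>"
  "y + l - \<epsilon> \<notin> \<Lambda>" "y - l + \<epsilon> \<notin> \<Lambda>" "y + l - \<beta> \<notin> \<Lambda>" "y - l + \<beta> \<notin> \<Lambda>"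
  "z + l - \<epsilon> \<notin> \<Lambda>" "z - l + \<epsilon> \<notin> \<Lambda>" "z + l - \<beta> \<notin> \<Lambda>" "z - l + \<beta> \<notin> \<Lambda>"
  using centres_off_lattice by (simp_all add: centres_def algebra_simps)

lemma sigma_double_l_nonzero: "\<sigma> (2 * l) \<noteq> 0" "\<sigma> (2 * l - 2 * \<epsilon>) \<noteq> 0"
  using doubles_off_lattice by (simp_all add: sigma_nonzero)

lemma brackets:
  "bracket (x + l - \<epsilon>) (y - l) = A3 * U1" "bracket (x + l - \<epsilon>) (y + l) = U2 * A4"
  "bracket (x - l + \<epsilon>) (y - l) = U3 * A2" "bracket (x - l + \<epsilon>) (y + l) = A1 * U4"
  "bracket (y + l - \<beta>) (z + l - \<epsilon>) = V1 * B4" "bracket (y - l + \<beta>) (z + l - \<epsilon>) = B1 * V2"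
  "bracket (y + l - \<beta>) (z - l + \<epsilon>) = B3 * V3" "bracket (y - l + \<beta>) (z - l + \<epsilon>) = V4 * B2"
  "bracket (x + l - \<beta>) (z + l) = W1 * D4" "bracket (x + l - \<beta>) (z - l) = D3 * W2"
  "bracket (x - l + \<beta>) (z + l) = D1 * W4" "bracket (x - l + \<beta>) (z - l) = W3 * D2"
  unfolding atom_defs by (rule bracket_eqI; simp add: algebra_simps)+

lemma three_term_brackets:
  "bracket (x + l) (y - l + \<epsilon>) = A1 * U1" "bracket (x + l) (y + l - \<epsilon>) = U2 * A2"
  "bracket (x - l) (y - l + \<epsilon>) = U3 * A4" "bracket (x - l) (y + l - \<epsilon>) = A3 * U4"
  "bracket (y + l - \<epsilon>) (z + l - \<beta>) = V1 * B2" "bracket (y + l - \<epsilon>) (z - l + \<beta>) = B1 * V3"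
  "bracket (x + l) (z + l - \<beta>) = W1 * D2" "bracket (x + l) (z - l + \<beta>) = D1 * W2"
  "bracket (x - l) (z + l - \<beta>) = D3 * W4" "bracket (x - l) (z - l + \<beta>) = W3 * D4"
  "bracket (z + l - \<beta>) (y - l + \<epsilon>) = - (B3 * V2)" "bracket (z - l + \<beta>) (y - l + \<epsilon>) = - (V4 * B4)"
  "bracket (y - l + \<epsilon>) (y + l - \<epsilon>) = - (\<sigma> (2 * y) * \<sigma> (2 * l - 2 * \<epsilon>))"
  unfolding atom_defs by (rule bracket_eqI bracket_eq_negI; simp add: algebra_simps)+

lemma three_term:
  "A1 * U1 * V1 * B2 - U2 * A2 * B3 * V2 = W1 * D2 * \<sigma> (2 * y) * \<sigma> (2 * l - 2 * \<epsilon>)"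
  "A1 * U1 * B1 * V3 - U2 * A2 * V4 * B4 = D1 * W2 * \<sigma> (2 * y) * \<sigma> (2 * l - 2 * \<epsilon>)"
  "U3 * A4 * V1 * B2 - A3 * U4 * B3 * V2 = D3 * W4 * \<sigma> (2 * y) * \<sigma> (2 * l - 2 * \<epsilon>)"
  "U3 * A4 * B1 * V3 - A3 * U4 * V4 * B4 = W3 * D4 * \<sigma> (2 * y) * \<sigma> (2 * l - 2 * \<epsilon>)"
  using bracket_three_term[OF off_lattice(1) off_lattice(12) off_lattice(11) off_lattice(17)]
    bracket_three_term[OF off_lattice(1) off_lattice(12) off_lattice(11) off_lattice(18)]
    bracket_three_term[OF off_lattice(2) off_lattice(12) off_lattice(11) off_lattice(17)]
    bracket_three_term[OF off_lattice(2) off_lattice(12) off_lattice(11) off_lattice(18)]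
  unfolding three_term_brackets by (simp_all add: algebra_simps)

(* In lax_pairing_pp, pm, mp, mm the first sign is that of the column wcol (x +- l),
   the second that of the row wrow (z +- (l - eps)). *)
lemma lax_pairing_pp:
  "exp (\<epsilon> * Gx) * pairing (wrow (z + l - \<epsilon>)) (Ly *v wcol (x + l - \<epsilon>)) =
   lax_factor * (exp px * pairing (wrow (z + l - \<epsilon>)) (Vz *v wcol (x + l - \<beta>)))"
proof -
  have "pairing (wrow (z + l - \<epsilon>)) (Ly *v wcol (x + l - \<epsilon>)) =
      exp (- py) * A4 * B1 / (A2 * B3) * (A1 * U1 * V1 * B2 - U2 * A2 * B3 * V2) / (\<sigma> (2 * y) * \<sigma> (2 * l))"
    using atoms_nonzero
    by (simp add: pairing_wL off_lattice brackets) (simp add: exp_py_eq field_simps)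
  also have "\<dots> = exp (- py) * A4 * B1 * W1 * D2 * \<sigma> (2 * l - 2 * \<epsilon>) / (A2 * B3 * \<sigma> (2 * l))"
    unfolding three_term(1) using atoms_nonzero sigma_double_nonzero by (simp add: field_simps)
  moreover have "pairing (wrow (z + l - \<epsilon>)) (Vz *v wcol (x + l - \<beta>)) =
      exp (- (\<epsilon> * Gz)) * (W1 * D4) * \<sigma> (2 * l - 2 * \<epsilon>) / \<sigma> (2 * l)"
    by (simp add: pairing_wL_plus off_lattice brackets sigma_double_nonzero)
  ultimately show ?thesis
    using atoms_nonzero by (simp add: lax_factor_def exp_minus field_simps)
qed


lemma lax_pairing_pm:
  "exp (\<epsilon> * Gx) * pairing (wrow (z - l + \<epsilon>)) (Ly *v wcol (x + l - \<epsilon>)) =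
   lax_factor * (exp px * pairing (wrow (z - l + \<epsilon>)) (Vz *v wcol (x + l - \<beta>)))"
proof -
  have "pairing (wrow (z - l + \<epsilon>)) (Ly *v wcol (x + l - \<epsilon>)) =
      exp (- py) * A4 * B2 / (A2 * B4) * (A1 * U1 * B1 * V3 - U2 * A2 * V4 * B4) / (\<sigma> (2 * y) * \<sigma> (2 * l))"
    using atoms_nonzero
    by (simp add: pairing_wL off_lattice brackets) (simp add: exp_py_eq field_simps)
  also have "\<dots> = exp (- py) * A4 * B2 * D1 * W2 * \<sigma> (2 * l - 2 * \<epsilon>) / (A2 * B4 * \<sigma> (2 * l))"
    unfolding three_term(2) using atoms_nonzero sigma_double_nonzero by (simp add: field_simps)
  moreover have "pairing (wrow (z - l + \<epsilon>)) (Vz *v wcol (x + l - \<beta>)) =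
      exp (- (\<epsilon> * Gz)) * (B2 * B3 * D1 * D4) / (B1 * B4 * D2 * D3) * (D3 * W2) * \<sigma> (2 * l - 2 * \<epsilon>) / \<sigma> (2 * l)"
    by (simp add: pairing_wL_minus off_lattice brackets sigma_double_nonzero) (simp add: exp_Gz_eq)
  ultimately show ?thesis
    using atoms_nonzero by (simp add: lax_factor_def exp_minus field_simps)
qed

lemma lax_pairing_mp:
  "exp (- (\<epsilon> * Gx)) * pairing (wrow (z + l - \<epsilon>)) (Ly *v wcol (x - l + \<epsilon>)) =
   lax_factor * (exp (- px) * pairing (wrow (z + l - \<epsilon>)) (Vz *v wcol (x - l + \<beta>)))"
proof -
  have "pairing (wrow (z + l - \<epsilon>)) (Ly *v wcol (x - l + \<epsilon>)) =
      exp (- py) * A1 * B1 / (A3 * B3) * (U3 * A4 * V1 * B2 - A3 * U4 * B3 * V2) / (\<sigma> (2 * y) * \<sigma> (2 * l))"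
    using atoms_nonzero
    by (simp add: pairing_wL off_lattice brackets) (simp add: exp_py_eq field_simps)
  also have "\<dots> = exp (- py) * A1 * B1 * D3 * W4 * \<sigma> (2 * l - 2 * \<epsilon>) / (A3 * B3 * \<sigma> (2 * l))"
    unfolding three_term(3) using atoms_nonzero sigma_double_nonzero by (simp add: field_simps)
  moreover have "pairing (wrow (z + l - \<epsilon>)) (Vz *v wcol (x - l + \<beta>)) =
      exp (- (\<epsilon> * Gz)) * (D1 * W4) * \<sigma> (2 * l - 2 * \<epsilon>) / \<sigma> (2 * l)"
    by (simp add: pairing_wL_plus off_lattice brackets sigma_double_nonzero)
  ultimately show ?thesis
    using atoms_nonzero by (subst exp_Gx_eq) (simp add: lax_factor_def exp_minus field_simps power2_eq_square)
qed

lemma lax_pairing_mm: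
  "exp (- (\<epsilon> * Gx)) * pairing (wrow (z - l + \<epsilon>)) (Ly *v wcol (x - l + \<epsilon>)) =
   lax_factor * (exp (- px) * pairing (wrow (z - l + \<epsilon>)) (Vz *v wcol (x - l + \<beta>)))"
proof -
  have "pairing (wrow (z - l + \<epsilon>)) (Ly *v wcol (x - l + \<epsilon>)) =
      exp (- py) * A1 * B2 / (A3 * B4) * (U3 * A4 * B1 * V3 - A3 * U4 * V4 * B4) / (\<sigma> (2 * y) * \<sigma> (2 * l))"
    using atoms_nonzero
    by (simp add: pairing_wL off_lattice brackets) (simp add: exp_py_eq field_simps)
  also have "\<dots> = exp (- py) * A1 * B2 * W3 * D4 * \<sigma> (2 * l - 2 * \<epsilon>) / (A3 * B4 * \<sigma> (2 * l))"
    unfolding three_term(4) using atoms_nonzero sigma_double_nonzero by (simp add: field_simps)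
  moreover have "pairing (wrow (z - l + \<epsilon>)) (Vz *v wcol (x - l + \<beta>)) =
      exp (- (\<epsilon> * Gz)) * (B2 * B3 * D1 * D4) / (B1 * B4 * D2 * D3) * (W3 * D2) * \<sigma> (2 * l - 2 * \<epsilon>) / \<sigma> (2 * l)"
    by (simp add: pairing_wL_minus off_lattice brackets sigma_double_nonzero) (simp add: exp_Gz_eq)
  ultimately show ?thesis
    using atoms_nonzero by (subst exp_Gx_eq) (simp add: lax_factor_def exp_minus field_simps power2_eq_square)
qed

lemma lax_proportional: "Ly ** Vx = lax_factor *\<^sub>m (Vz ** Lx)"
proof (rule matrix2_eq_by_tests)
  have "bracket (z + l - \<epsilon>) (z - l + \<epsilon>) = \<sigma> (2 * z) * \<sigma> (2 * l - 2 * \<epsilon>)"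
    by (rule bracket_eqI) (simp_all add: algebra_simps)
  thus "det2 (wrow (z + l - \<epsilon>)) (wrow (z - l + \<epsilon>)) \<noteq> 0"
    by (simp add: det2_wrow off_lattice sigma_double_nonzero sigma_double_l_nonzero)
  have "bracket (x + l) (x - l) = \<sigma> (2 * x) * \<sigma> (2 * l)"
    by (rule bracket_eqI) (simp_all add: algebra_simps)
  thus "det2 (wcol (x + l)) (wcol (x - l)) \<noteq> 0"
    by (simp add: det2_wcol off_lattice sigma_double_nonzero sigma_double_l_nonzero)
  fix r c
  assume "r \<in> {wrow (z + l - \<epsilon>), wrow (z - l + \<epsilon>)}" "c \<in> {wcol (x + l), wcol (x - l)}"
  thus "pairing r ((Ly ** Vx) *v c) = pairing r ((lax_factor *\<^sub>m (Vz ** Lx)) *v c)"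
    using lax_pairing_pp lax_pairing_pm lax_pairing_mp lax_pairing_mm
    by (auto simp: msc_mult_vector vector_scalar_commute wL_mult_wcol_plus wL_mult_wcol_minus
        off_lattice sigma_double_nonzero sigma_double_l_nonzero simp flip: matrix_vector_mul_assoc)
qed

end

context toda_cell
begin

lemma eventually_lax_proportional:
  "\<forall>\<^sub>F l in cosparse UNIV. \<exists>c. c \<noteq> 0 \<and>
     wL w1 w2 py y \<beta> l ** wV w1 w2 \<epsilon> Gx x l = c *\<^sub>m (wV w1 w2 \<epsilon> Gz z l ** wL w1 w2 px x \<beta> l)"
proof -
  have "\<forall>\<^sub>F l in cosparse UNIV. (\<forall>a\<in>centres. a + l \<notin> \<Lambda> \<and> a - l \<notin> \<Lambda>) \<and>
      2 * l \<notin> \<Lambda> \<and> 2 * l - 2 * \<epsilon> \<notin> \<Lambda>"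
    using eventually_cosparse_affine_notin_lattice[of 2 0] eventually_cosparse_affine_notin_lattice[of 2 "- 2 * \<epsilon>"]
    by (intro eventually_conj eventually_ball_finite ballI eventually_cosparse_shift_notin_lattice)
       (simp_all add: centres_def)
  thus ?thesis
  proof (rule eventually_mono)
    fix l
    assume "(\<forall>a\<in>centres. a + l \<notin> \<Lambda> \<and> a - l \<notin> \<Lambda>) \<and> 2 * l \<notin> \<Lambda> \<and> 2 * l - 2 * \<epsilon> \<notin> \<Lambda>"
    then interpret toda_cell_at w1 w2 \<epsilon> \<beta> x y z px py Gx Gz l
      by unfold_locales auto
    show "\<exists>c. c \<noteq> 0 \<and>
      wL w1 w2 py y \<beta> l ** wV w1 w2 \<epsilon> Gx x l = c *\<^sub>m (wV w1 w2 \<epsilon> Gz z l ** wL w1 w2 px x \<beta> l)"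
      using lax_proportional lax_factor_nonzero by (auto simp: wV_eq_wL)
  qed
qed

end

theorem mainTheorem7:
  fixes w1 w2 eps :: complex
    and \<beta> :: "int \<Rightarrow> complex"
    and x p G :: "int \<Rightarrow> int \<Rightarrow> complex"
  assumes periods: "Im (w2 / w1) \<noteq> 0"
    and eps_nz: "eps \<noteq> 0"
    and gen_F: "\<forall>k n.
        wF_ok w1 w2 (x k n) (x k (n + 1)) eps \<and>
        wF_ok w1 w2 (x k n) (x (k - 1) (n + 1)) (\<beta> (k - 1) - eps) \<and>
        wF_ok w1 w2 (x k n) (x k (n - 1)) eps \<and>
        wF_ok w1 w2 (x k n) (x (k + 1) (n - 1)) (\<beta> k - eps) \<and>
        wF_ok w1 w2 (x k n) (x (k + 1) n) (\<beta> k) \<and>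
        wF_ok w1 w2 (x k n) (x (k - 1) n) (\<beta> (k - 1))"
    and gen_x: "\<forall>k n. wsigma w1 w2 (2 * x k n) \<noteq> 0"
    and toda: "\<forall>k n.
        wF w1 w2 (x k n) (x k (n + 1)) eps * wF w1 w2 (x k n) (x (k - 1) (n + 1)) (\<beta> (k - 1) - eps) *
        wF w1 w2 (x k n) (x k (n - 1)) eps * wF w1 w2 (x k n) (x (k + 1) (n - 1)) (\<beta> k - eps)
      = wF w1 w2 (x k n) (x (k + 1) n) (\<beta> k) * wF w1 w2 (x k n) (x (k - 1) n) (\<beta> (k - 1))"
    and p_def: "\<forall>k n. exp (2 * p k n) =
        wF w1 w2 (x k n) (x k (n - 1)) eps * wF w1 w2 (x k n) (x (k + 1) (n - 1)) (\<beta> k - eps)"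
    and G_def: "\<forall>k n. exp (2 * eps * G k n) =
        wF w1 w2 (x k n) (x (k - 1) n) (\<beta> (k - 1)) / wF w1 w2 (x k n) (x (k - 1) (n + 1)) (\<beta> (k - 1) - eps)"
  shows "\<forall>k n. \<exists>S :: complex set. S sparse_in UNIV \<and>
      (\<forall>l. l \<notin> S \<longrightarrow> (\<exists>c :: complex. c \<noteq> 0 \<and>
         wL w1 w2 (p k (n + 1)) (x k (n + 1)) (\<beta> k) l ** wV w1 w2 eps (G k n) (x k n) l
         = c *\<^sub>m (wV w1 w2 eps (G (k + 1) n) (x (k + 1) n) l ** wL w1 w2 (p k n) (x k n) (\<beta> k) l)))"
proof (intro allI)
  fix k n
  interpret period_lattice w1 w2 by unfold_locales (rule periods)
  have "wF w1 w2 (x k n) (x (k - 1) (n + 1)) (\<beta> (k - 1) - eps) \<noteq> 0"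
    using gen_F by (auto simp: wF_ok_def wF_def)
  hence "exp (2 * p k n) * wF w1 w2 (x k n) (x k (n + 1)) eps =
      exp (2 * eps * G k n) * wF w1 w2 (x k n) (x (k + 1) n) (\<beta> k)"
    using toda[rule_format, of k n] unfolding p_def[rule_format] G_def[rule_format]
    by (simp add: field_simps)
  moreover have "wF_ok w1 w2 (x k (n + 1)) (x (k + 1) n) (\<beta> k - eps)"
    using gen_F[rule_format, of k "n + 1"] by simp
  ultimately interpret toda_cell w1 w2 eps "\<beta> k" "x k n" "x k (n + 1)" "x (k + 1) n"
      "p k n" "p k (n + 1)" "G k n" "G (k + 1) n"
    using gen_F gen_x p_def[rule_format, of k "n + 1"] G_def[rule_format, of "k + 1" n]
    by unfold_locales auto
  show "\<exists>S. S sparse_in UNIV \<and> (\<forall>l. l \<notin> S \<longrightarrow> (\<exists>c. c \<noteq> 0 \<and>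
      wL w1 w2 (p k (n + 1)) (x k (n + 1)) (\<beta> k) l ** wV w1 w2 eps (G k n) (x k n) l
      = c *\<^sub>m (wV w1 w2 eps (G (k + 1) n) (x (k + 1) n) l ** wL w1 w2 (p k n) (x k n) (\<beta> k) l)))"
    using eventually_lax_proportional unfolding eventually_cosparse by blast
qed

end
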